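(* Let $q$ be a power of a prime $p$ and let $X=\{F=0\}\subset\mathbb{P}^n$ be a Frobenius nonclassical hypersurface of degree $d$ over $\mathbb{F}_q$. Assume there exists a line $L\subset\mathbb{P}^n$ defined over $\mathbb{F}_q$ with $L\not\subset X$ such that the intersection $X\cap L$ is not a $p$-th power (i.e. the binary form $F|_L$ is not a $p$-th power). Then $X\cap L$ contains at least one $\mathbb{F}_q$-point, and the intersection multiplicity of $X$ and $L$ at every point of $X\cap L$ not defined over $\mathbb{F}_q$ is divisible by $p$.
   Context: $X$ is Frobenius nonclassical if $F$ divides $\sum_{i=0}^n x_i^q\frac{\partial F}{\partial x_i}$. *)

theory Defs
  imports "HOL-Library.Poly_Mapping" "HOL-Library.Cardinality" "HOL-Algebra.Algebraic_Closure_Type"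
begin

text \<open>Multivariate polynomials in the variables x_0, x_1, ... over a ring 'a,
  represented as finitely supported maps from exponent vectors (finitely supported
  maps nat to nat) to coefficients.  Multiplication is the convolution product
  provided by the library, so mpoly is a commutative ring and dvd is divisibility
  in the polynomial ring.\<close>

type_synonym 'a mpoly = "(nat \<Rightarrow>\<^sub>0 nat) \<Rightarrow>\<^sub>0 'a"

definition mp_monom :: "(nat \<Rightarrow>\<^sub>0 nat) \<Rightarrow> 'a::zero \<Rightarrow> 'a mpoly" where
  "mp_monom \<alpha> c = Poly_Mapping.single \<alpha> c"

definition mp_const :: "'a::zero \<Rightarrow> 'a mpoly" where
  "mp_const c = mp_monom 0 c"

definition mp_var :: "nat \<Rightarrow> 'a::{zero,one} mpoly" where
  "mp_var i = mp_monom (Poly_Mapping.single i 1) 1"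

definition mp_eval :: "'a::comm_ring_1 mpoly \<Rightarrow> (nat \<Rightarrow> 'a) \<Rightarrow> 'a" where
  "mp_eval F x = (\<Sum>\<alpha>\<in>Poly_Mapping.keys F. Poly_Mapping.lookup F \<alpha> * (\<Prod>i\<in>Poly_Mapping.keys \<alpha>. x i ^ Poly_Mapping.lookup \<alpha> i))"

definition mp_subst :: "'a::comm_ring_1 mpoly \<Rightarrow> (nat \<Rightarrow> 'a mpoly) \<Rightarrow> 'a mpoly" where
  "mp_subst F l = (\<Sum>\<alpha>\<in>Poly_Mapping.keys F. mp_const (Poly_Mapping.lookup F \<alpha>) * (\<Prod>i\<in>Poly_Mapping.keys \<alpha>. l i ^ Poly_Mapping.lookup \<alpha> i))"

definition mp_pderiv :: "nat \<Rightarrow> 'a::comm_ring_1 mpoly \<Rightarrow> 'a mpoly" where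
  "mp_pderiv i F = (\<Sum>\<alpha>\<in>Poly_Mapping.keys F.
      mp_monom (\<alpha> - Poly_Mapping.single i 1) (of_nat (Poly_Mapping.lookup \<alpha> i) * Poly_Mapping.lookup F \<alpha>))"

definition mp_map :: "('a::zero \<Rightarrow> 'b::zero) \<Rightarrow> 'a mpoly \<Rightarrow> 'b mpoly" where
  "mp_map f F = Poly_Mapping.map f F"

definition is_form :: "nat \<Rightarrow> nat \<Rightarrow> 'a::zero mpoly \<Rightarrow> bool" where
  "is_form n d F \<longleftrightarrow> (\<forall>\<alpha>\<in>Poly_Mapping.keys F. (\<forall>i\<in>Poly_Mapping.keys \<alpha>. i \<le> n) \<and> (\<Sum>i\<in>Poly_Mapping.keys \<alpha>. Poly_Mapping.lookup \<alpha> i) = d)"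

definition frobenius_nonclassical :: "nat \<Rightarrow> nat \<Rightarrow> 'a::comm_ring_1 mpoly \<Rightarrow> bool" where
  "frobenius_nonclassical n q F \<longleftrightarrow> F dvd (\<Sum>i\<le>n. mp_var i ^ q * mp_pderiv i F)"

text \<open>Restriction of F to the line spanned by the points P and Q:
  the binary form G(s,t) = F(s P + t Q) in the variables s = x_0, t = x_1.\<close>
definition restrict_line :: "'a::comm_ring_1 mpoly \<Rightarrow> (nat \<Rightarrow> 'a) \<Rightarrow> (nat \<Rightarrow> 'a) \<Rightarrow> 'a mpoly" where
  "restrict_line F P Q = mp_subst F (\<lambda>i. mp_const (P i) * mp_var 0 + mp_const (Q i) * mp_var 1)"

text \<open>Multiplicity of the point (s:t) of P^1 as a root of a (nonzero) binary form G
  in the variables x_0, x_1: the largest m with (t x_0 - s x_1)^m dividing G.\<close>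
definition binform_mult :: "'a::comm_ring_1 mpoly \<Rightarrow> 'a \<Rightarrow> 'a \<Rightarrow> nat" where
  "binform_mult G s t = (GREATEST m. (mp_const t * mp_var 0 - mp_const s * mp_var 1) ^ m dvd G)"

text \<open>Intersection multiplicity of X = {F = 0} and the line L = span(P,Q) at the
  point s P + t Q (coordinates in the algebraic closure).\<close>
definition int_mult :: "'a::field mpoly \<Rightarrow> (nat \<Rightarrow> 'a) \<Rightarrow> (nat \<Rightarrow> 'a) \<Rightarrow>
    'a alg_closure \<Rightarrow> 'a alg_closure \<Rightarrow> nat" where
  "int_mult F P Q s t = binform_mult (mp_map to_ac (restrict_line F P Q)) s t"

end

theory Submission
  imports Defs "HOL-Computational_Algebra.Polynomial" "HOL-Computational_Algebra.Primes"
begin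

text \<open>
  Let G(x_0, x_1) = F(x_0 P + x_1 Q) be the restriction of F to the line and G_j its partial
  derivative by x_j. Since P and Q are F_q-rational, restricting F H = sum x_i^q dF/dx_i gives
  G H' = x_0^q G_0 + x_1^q G_1, while Euler's formula gives x_0 G_0 + x_1 G_1 = d G. Eliminating,
  G divides R G_0 and R G_1 for the Moore form R = x_0 x_1^q - x_0^q x_1, which is up to a unit the
  product of the linear forms of all F_q-rational points of the line.

  If G had no F_q-rational zero, it would be coprime to R, hence divide and so be annihilated by its
  own partial derivatives; over a finite field this makes G a p-th power. At a zero outside F_q
  with linear form L and multiplicity m, write G = L^m K: differentiating shows that L^m divides
  m L^(m-1) R K, and since L is prime and divides neither R nor K, m vanishes in the field, i.e.
  p divides m.
\<close>

section \<open>Finitely supported maps and the polynomial ring\<close>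

lemma mp_var_eq_single: "mp_var i = Poly_Mapping.single (Poly_Mapping.single i 1) 1"
  by (simp add: mp_var_def mp_monom_def)

lemma mp_const_eq_single: "mp_const c = Poly_Mapping.single 0 c"
  by (simp add: mp_const_def mp_monom_def)

lemma lookup_map: "g 0 = 0 \<Longrightarrow> Poly_Mapping.lookup (Poly_Mapping.map g f) k = g (Poly_Mapping.lookup f k)"
  by transfer (simp add: when_def)

lemma poly_mapping_eq_sum_single:
  "(A::'k \<Rightarrow>\<^sub>0 'b::comm_monoid_add) = (\<Sum>\<alpha>\<in>Poly_Mapping.keys A. Poly_Mapping.single \<alpha> (Poly_Mapping.lookup A \<alpha>))"
proof (rule poly_mapping_eqI)
  fix k
  show "Poly_Mapping.lookup A k = Poly_Mapping.lookup (\<Sum>\<alpha>\<in>Poly_Mapping.keys A. Poly_Mapping.single \<alpha> (Poly_Mapping.lookup A \<alpha>)) k"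
    by (cases "k \<in> Poly_Mapping.keys A") (auto simp: lookup_sum lookup_single when_def in_keys_iff)
qed

lemma sum_lookup_keys_superset:
  assumes "finite S" "Poly_Mapping.keys A \<subseteq> S" "\<And>\<alpha>. f \<alpha> 0 = 0"
  shows "(\<Sum>\<alpha>\<in>S. f \<alpha> (Poly_Mapping.lookup A \<alpha>)) = (\<Sum>\<alpha>\<in>Poly_Mapping.keys A. f \<alpha> (Poly_Mapping.lookup A \<alpha>))"
  by (rule sum.mono_neutral_right) (use assms in \<open>auto simp: in_keys_iff\<close>)

lemma additive_sum:
  fixes h :: "'b::comm_monoid_add \<Rightarrow> 'c::cancel_comm_monoid_add"
  assumes "\<And>x y. h (x + y) = h x + h y"
  shows "h (sum f S) = (\<Sum>s\<in>S. h (f s))"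
proof -
  have "h 0 = 0" using assms[of 0 0] by simp
  then show ?thesis using sum_comp_morphism[of h f S] assms by (simp add: comp_def)
qed

lemma poly_mapping_additive_eqI:
  fixes \<Phi> \<Psi> :: "('k \<Rightarrow>\<^sub>0 'b::comm_monoid_add) \<Rightarrow> 'c::cancel_comm_monoid_add"
  assumes "\<And>A B. \<Phi> (A + B) = \<Phi> A + \<Phi> B" "\<And>A B. \<Psi> (A + B) = \<Psi> A + \<Psi> B"
    and "\<And>\<alpha> a. \<Phi> (Poly_Mapping.single \<alpha> a) = \<Psi> (Poly_Mapping.single \<alpha> a)"
  shows "\<Phi> A = \<Psi> A"
proof -
  have "\<Phi> A = (\<Sum>\<alpha>\<in>Poly_Mapping.keys A. \<Phi> (Poly_Mapping.single \<alpha> (Poly_Mapping.lookup A \<alpha>)))"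
    by (subst poly_mapping_eq_sum_single) (rule additive_sum, rule assms(1))
  also have "\<dots> = (\<Sum>\<alpha>\<in>Poly_Mapping.keys A. \<Psi> (Poly_Mapping.single \<alpha> (Poly_Mapping.lookup A \<alpha>)))"
    using assms(3) by simp
  also have "\<dots> = \<Psi> A"
    by (subst (2) poly_mapping_eq_sum_single) (rule additive_sum[symmetric], rule assms(2))
  finally show ?thesis .
qed

lemma poly_mapping_biadditive_eqI:
  fixes \<Phi> \<Psi> :: "('k \<Rightarrow>\<^sub>0 'b::comm_monoid_add) \<Rightarrow> ('k \<Rightarrow>\<^sub>0 'b) \<Rightarrow> 'c::cancel_comm_monoid_add"
  assumes "\<And>A1 A2 B. \<Phi> (A1 + A2) B = \<Phi> A1 B + \<Phi> A2 B" "\<And>A B1 B2. \<Phi> A (B1 + B2) = \<Phi> A B1 + \<Phi> A B2"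
    and "\<And>A1 A2 B. \<Psi> (A1 + A2) B = \<Psi> A1 B + \<Psi> A2 B" "\<And>A B1 B2. \<Psi> A (B1 + B2) = \<Psi> A B1 + \<Psi> A B2"
    and "\<And>\<alpha> a \<beta> b. \<Phi> (Poly_Mapping.single \<alpha> a) (Poly_Mapping.single \<beta> b)
                 = \<Psi> (Poly_Mapping.single \<alpha> a) (Poly_Mapping.single \<beta> b)"
  shows "\<Phi> A B = \<Psi> A B"
proof -
  have single_left: "\<Phi> (Poly_Mapping.single \<alpha> a) B = \<Psi> (Poly_Mapping.single \<alpha> a) B" for \<alpha> a
    by (rule poly_mapping_additive_eqI[where \<Phi>="\<Phi> (Poly_Mapping.single \<alpha> a)"]) (use assms in auto)
  show ?thesis
    by (rule poly_mapping_additive_eqI[where \<Phi>="\<lambda>A. \<Phi> A B" and \<Psi>="\<lambda>A. \<Psi> A B"])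
       (use assms single_left in auto)
qed

lemma mp_const_add: "mp_const (a + b) = mp_const a + mp_const b"
  by (simp add: mp_const_eq_single single_add)

lemma mp_const_mult: "mp_const ((a::'a::comm_ring_1) * b) = mp_const a * mp_const b"
  by (simp add: mp_const_eq_single mult_single)

lemma mp_const_0 [simp]: "mp_const 0 = 0"
  by (simp add: mp_const_eq_single)

lemma mp_const_1 [simp]: "mp_const 1 = 1"
  by (simp add: mp_const_eq_single)

lemma mp_const_eq_0_iff [simp]: "mp_const c = 0 \<longleftrightarrow> c = 0"
  by (metis mp_const_eq_single lookup_single_eq lookup_zero single_zero)

lemma mp_const_uminus: "mp_const (- a) = - mp_const a"
  by (simp add: mp_const_eq_single single_uminus)

lemma mp_const_diff: "mp_const (a - b) = mp_const a - mp_const b"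
  by (simp add: mp_const_eq_single single_diff)

lemma mp_const_power: "mp_const ((a::'a::comm_ring_1) ^ n) = mp_const a ^ n"
  by (induction n) (simp_all add: mp_const_mult)

lemma mp_const_of_nat: "mp_const (of_nat n) = of_nat n"
  by (simp add: mp_const_eq_single)

lemma mp_const_dvd_one:
  assumes "(c::'a::field) \<noteq> 0"
  shows "mp_const c dvd 1"
  using assms by (metis dvd_triv_left mp_const_1 mp_const_mult right_inverse)

lemma mp_const_mult_dvd_iff:
  assumes "(c::'a::field) \<noteq> 0"
  shows "mp_const c * A dvd B \<longleftrightarrow> A dvd B"
proof
  assume "mp_const c * A dvd B"
  then show "A dvd B" by (rule dvd_mult_right)
next
  assume "A dvd B"
  then have "mp_const c * A dvd mp_const c * B" by simp
  moreover have "mp_const c * B dvd B"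
    using mp_const_dvd_one[OF assms] by (metis mult_dvd_mono dvd_refl mult_1)
  ultimately show "mp_const c * A dvd B" by (rule dvd_trans)
qed

lemma dvd_mp_const_mult_iff:
  assumes "(c::'a::field) \<noteq> 0"
  shows "A dvd mp_const c * B \<longleftrightarrow> A dvd B"
proof
  assume "A dvd mp_const c * B"
  moreover have "mp_const c * B dvd B"
    using mp_const_dvd_one[OF assms] by (metis mult_dvd_mono dvd_refl mult_1)
  ultimately show "A dvd B" by (rule dvd_trans)
qed simp

lemma mp_var_neq_0 [simp]: "mp_var i \<noteq> (0::'a::comm_ring_1 mpoly)"
  by (metis mp_var_eq_single lookup_single_eq lookup_zero one_neq_zero)

lemma mp_var_power: "mp_var i ^ k = Poly_Mapping.single (Poly_Mapping.single i k) (1::'a::comm_ring_1)"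
proof (induction k)
  case (Suc k)
  have "Poly_Mapping.single i (Suc k) = Poly_Mapping.single i 1 + Poly_Mapping.single i k"
    by (simp add: single_add[symmetric])
  then show ?case using Suc by (simp add: mp_var_eq_single mult_single)
qed simp

lemma single_power: "Poly_Mapping.single \<beta> (c::'a::comm_ring_1) ^ k = Poly_Mapping.single (\<Sum>j<k. \<beta>) (c ^ k)"
  by (induction k) (simp_all add: mult_single add.commute)

lemma single_eq_const_mult_vars:
  "Poly_Mapping.single \<alpha> (c::'a::comm_ring_1)
     = mp_const c * (\<Prod>i\<in>Poly_Mapping.keys \<alpha>. mp_var i ^ Poly_Mapping.lookup \<alpha> i)"
proof -
  have prod_singles: "(\<Prod>i\<in>S. Poly_Mapping.single (Poly_Mapping.single i (f i)) (1::'a))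
     = Poly_Mapping.single (\<Sum>i\<in>S. Poly_Mapping.single i (f i)) 1" for S f
    by (induction S rule: infinite_finite_induct) (simp_all add: mult_single)
  have "(\<Prod>i\<in>Poly_Mapping.keys \<alpha>. mp_var i ^ Poly_Mapping.lookup \<alpha> i) = Poly_Mapping.single \<alpha> (1::'a)"
    by (simp add: mp_var_power prod_singles flip: poly_mapping_eq_sum_single)
  then show ?thesis by (simp add: mp_const_eq_single mult_single)
qed

lemma mpoly_induct:
  fixes F :: "'a::comm_ring_1 mpoly"
  assumes const: "\<And>c. P (mp_const c)" and var: "\<And>i. i \<in> V \<Longrightarrow> P (mp_var i)"
    and add: "\<And>A B. P A \<Longrightarrow> P B \<Longrightarrow> P (A + B)" and mult: "\<And>A B. P A \<Longrightarrow> P B \<Longrightarrow> P (A * B)"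
    and vars: "\<forall>\<alpha>\<in>Poly_Mapping.keys F. Poly_Mapping.keys \<alpha> \<subseteq> V"
  shows "P F"
proof -
  have P1: "P 1" using const[of 1] by simp
  have Ppow: "P (A ^ k)" if "P A" for A k
    using that by (induction k) (auto intro: P1 mult)
  have Pprod: "P (\<Prod>i\<in>S. f i)" if "finite S" "\<And>i. i \<in> S \<Longrightarrow> P (f i)" for S and f :: "nat \<Rightarrow> 'a mpoly"
    using that by (induction S rule: finite_induct) (auto intro: P1 mult)
  have Psum: "P (\<Sum>i\<in>S. f i)" if "finite S" "\<And>i. i \<in> S \<Longrightarrow> P (f i)" for S and f :: "_ \<Rightarrow> 'a mpoly"
    using that const[of 0] by (induction S rule: finite_induct) (auto intro: add)
  have "P (Poly_Mapping.single \<alpha> (Poly_Mapping.lookup F \<alpha>))" if "\<alpha> \<in> Poly_Mapping.keys F" for \<alpha>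
  proof -
    have "P (\<Prod>i\<in>Poly_Mapping.keys \<alpha>. mp_var i ^ Poly_Mapping.lookup \<alpha> i)"
      by (rule Pprod) (use vars that in \<open>auto intro: Ppow var\<close>)
    then show ?thesis by (subst single_eq_const_mult_vars) (rule mult[OF const])
  qed
  then have "P (\<Sum>\<alpha>\<in>Poly_Mapping.keys F. Poly_Mapping.single \<alpha> (Poly_Mapping.lookup F \<alpha>))"
    by (intro Psum) auto
  then show ?thesis by (simp flip: poly_mapping_eq_sum_single)
qed


section \<open>Evaluation, coefficient maps and substitution\<close>

definition monomial_value :: "(nat \<Rightarrow>\<^sub>0 nat) \<Rightarrow> (nat \<Rightarrow> 'a::comm_semiring_1) \<Rightarrow> 'a" where
  "monomial_value \<alpha> x = (\<Prod>i\<in>Poly_Mapping.keys \<alpha>. x i ^ Poly_Mapping.lookup \<alpha> i)"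

lemma monomial_value_superset:
  assumes "finite S" "Poly_Mapping.keys \<alpha> \<subseteq> S"
  shows "(\<Prod>i\<in>S. x i ^ Poly_Mapping.lookup \<alpha> i) = monomial_value \<alpha> x"
  unfolding monomial_value_def by (rule prod.mono_neutral_right) (use assms in \<open>auto simp: in_keys_iff\<close>)

lemma monomial_value_add: "monomial_value (\<alpha> + \<beta>) x = monomial_value \<alpha> x * monomial_value \<beta> x"
proof -
  let ?S = "Poly_Mapping.keys \<alpha> \<union> Poly_Mapping.keys \<beta>"
  have "monomial_value (\<alpha> + \<beta>) x = (\<Prod>i\<in>?S. x i ^ Poly_Mapping.lookup (\<alpha> + \<beta>) i)"
    by (rule monomial_value_superset[symmetric]) (auto dest: keys_add[THEN subsetD])
  also have "\<dots> = (\<Prod>i\<in>?S. x i ^ Poly_Mapping.lookup \<alpha> i) * (\<Prod>i\<in>?S. x i ^ Poly_Mapping.lookup \<beta> i)"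
    by (simp add: lookup_add power_add prod.distrib)
  also have "\<dots> = monomial_value \<alpha> x * monomial_value \<beta> x"
    by (simp add: monomial_value_superset)
  finally show ?thesis .
qed

lemma monomial_value_zero [simp]: "monomial_value 0 x = 1"
  by (simp add: monomial_value_def)

lemma monomial_value_single [simp]: "monomial_value (Poly_Mapping.single i k) x = x i ^ k"
  by (simp add: monomial_value_def)

lemma mp_eval_eq_sum_monomial_value:
  "mp_eval F x = (\<Sum>\<alpha>\<in>Poly_Mapping.keys F. Poly_Mapping.lookup F \<alpha> * monomial_value \<alpha> x)"
  by (simp add: mp_eval_def monomial_value_def)

lemma mp_eval_add: "mp_eval (A + B) x = mp_eval A x + mp_eval B x"
proof -
  let ?S = "Poly_Mapping.keys A \<union> Poly_Mapping.keys B"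
  let ?f = "\<lambda>\<alpha> c. c * monomial_value \<alpha> x"
  have "mp_eval (A + B) x = (\<Sum>\<alpha>\<in>?S. ?f \<alpha> (Poly_Mapping.lookup (A + B) \<alpha>))"
    unfolding mp_eval_eq_sum_monomial_value
    by (rule sum_lookup_keys_superset[symmetric]) (auto dest: keys_add[THEN subsetD])
  also have "\<dots> = (\<Sum>\<alpha>\<in>?S. ?f \<alpha> (Poly_Mapping.lookup A \<alpha>)) + (\<Sum>\<alpha>\<in>?S. ?f \<alpha> (Poly_Mapping.lookup B \<alpha>))"
    by (simp add: lookup_add distrib_right sum.distrib)
  also have "\<dots> = mp_eval A x + mp_eval B x"
    unfolding mp_eval_eq_sum_monomial_value by (subst (1 2) sum_lookup_keys_superset) auto
  finally show ?thesis .
qed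

lemma mp_eval_single [simp]: "mp_eval (Poly_Mapping.single \<alpha> c) x = c * monomial_value \<alpha> x"
  by (simp add: mp_eval_eq_sum_monomial_value)

lemma mp_eval_mult: "mp_eval (A * B) x = mp_eval A x * mp_eval B x"
  by (rule poly_mapping_biadditive_eqI[where \<Phi>="\<lambda>A B. mp_eval (A * B) x" and \<Psi>="\<lambda>A B. mp_eval A x * mp_eval B x"])
     (simp_all add: mp_eval_add distrib_left distrib_right mult_single monomial_value_add)

lemma mp_eval_zero [simp]: "mp_eval 0 x = 0"
  by (simp add: mp_eval_def)

lemma mp_eval_one [simp]: "mp_eval 1 x = 1"
  by (metis monomial_value_zero mp_eval_single mult_1 single_one)

lemma mp_eval_const [simp]: "mp_eval (mp_const c) x = c"
  by (simp add: mp_const_eq_single)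

lemma mp_eval_var [simp]: "mp_eval (mp_var i) x = x i"
  by (simp add: mp_var_eq_single)

lemma mp_eval_uminus: "mp_eval (- A) x = - mp_eval A x"
  by (metis add_eq_0_iff2 mp_eval_add mp_eval_zero right_minus)

lemma mp_eval_diff: "mp_eval (A - B) x = mp_eval A x - mp_eval B x"
  by (metis diff_conv_add_uminus mp_eval_add mp_eval_uminus)

lemma mp_eval_power: "mp_eval (A ^ n) x = mp_eval A x ^ n"
  by (induction n) (auto simp: mp_eval_mult)

lemma lookup_mp_map: "g 0 = 0 \<Longrightarrow> Poly_Mapping.lookup (mp_map g A) \<alpha> = g (Poly_Mapping.lookup A \<alpha>)"
  unfolding mp_map_def by (rule lookup_map)

lemma mp_map_single: "g 0 = 0 \<Longrightarrow> mp_map g (Poly_Mapping.single \<alpha> c) = Poly_Mapping.single \<alpha> (g c)"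
  unfolding mp_map_def by simp

lemma mp_map_add:
  assumes "g 0 = 0" "\<And>a b. g (a + b) = g a + g b"
  shows "mp_map g (A + B) = mp_map g A + mp_map g B"
  by (rule poly_mapping_eqI) (simp add: lookup_mp_map assms lookup_add)

lemma mp_map_diff:
  assumes "g 0 = 0" "\<And>a b. g (a - b) = g a - g b"
  shows "mp_map g (A - B) = mp_map g A - mp_map g (B::'a::ab_group_add mpoly)"
  by (rule poly_mapping_eqI) (simp add: lookup_mp_map assms lookup_minus)

lemma mp_map_mult:
  fixes g :: "'a::comm_ring_1 \<Rightarrow> 'b::comm_ring_1"
  assumes "g 0 = 0" "\<And>a b. g (a + b) = g a + g b" "\<And>a b. g (a * b) = g a * g b"
  shows "mp_map g (A * B) = mp_map g A * mp_map g B"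
  by (rule poly_mapping_biadditive_eqI[where \<Phi>="\<lambda>A B. mp_map g (A * B)" and \<Psi>="\<lambda>A B. mp_map g A * mp_map g B"])
     (simp_all add: mp_map_add[OF assms(1,2)] distrib_left distrib_right mult_single mp_map_single assms)

text \<open>Substitution is evaluation of the polynomial whose coefficients are viewed as constant
  polynomials; this makes it a ring homomorphism for free.\<close>

lemma mp_subst_eq_mp_eval: "mp_subst F l = mp_eval (mp_map mp_const F) l"
proof -
  have "Poly_Mapping.keys (mp_map mp_const F) = Poly_Mapping.keys F"
    by (auto simp: in_keys_iff lookup_mp_map)
  then show ?thesis
    unfolding mp_subst_def mp_eval_def by (simp add: lookup_mp_map)
qed

lemma mp_subst_add: "mp_subst (A + B) l = mp_subst A l + mp_subst B l"
  by (simp add: mp_subst_eq_mp_eval mp_map_add mp_const_add mp_eval_add)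

lemma mp_subst_mult: "mp_subst (A * B) l = mp_subst A l * mp_subst B l"
  by (simp add: mp_subst_eq_mp_eval mp_map_mult mp_const_add mp_const_mult mp_eval_mult)

lemma mp_subst_single: "mp_subst (Poly_Mapping.single \<alpha> c) l = mp_const c * monomial_value \<alpha> l"
  by (simp add: mp_subst_eq_mp_eval mp_map_single)

lemma mp_subst_const [simp]: "mp_subst (mp_const c) l = mp_const c"
  by (simp add: mp_const_eq_single mp_subst_single)

lemma mp_subst_var [simp]: "mp_subst (mp_var i) l = l i"
  by (simp add: mp_var_eq_single mp_subst_single)

lemma mp_subst_zero [simp]: "mp_subst 0 l = 0"
  by (metis mp_const_0 mp_subst_const)

lemma mp_subst_one [simp]: "mp_subst 1 l = 1"
  by (metis mp_const_1 mp_subst_const)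

lemma mp_subst_of_nat [simp]: "mp_subst (of_nat n) l = of_nat n"
  by (induction n) (auto simp: mp_subst_add)

lemma mp_subst_uminus: "mp_subst (- A) l = - mp_subst A l"
  by (metis add_eq_0_iff2 mp_subst_add mp_subst_zero right_minus)

lemma mp_subst_diff: "mp_subst (A - B) l = mp_subst A l - mp_subst B l"
  by (metis diff_conv_add_uminus mp_subst_add mp_subst_uminus)

lemma mp_subst_power: "mp_subst (A ^ n) l = mp_subst A l ^ n"
  by (induction n) (auto simp: mp_subst_mult)

lemma mp_subst_sum: "mp_subst (sum f S) l = (\<Sum>s\<in>S. mp_subst (f s) l)"
  by (rule additive_sum) (rule mp_subst_add)

lemma mp_subst_prod: "mp_subst (prod f S) l = (\<Prod>s\<in>S. mp_subst (f s) l)"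
  by (induction S rule: infinite_finite_induct) (auto simp: mp_subst_mult)

lemma mp_eval_subst: "mp_eval (mp_subst F l) x = mp_eval F (\<lambda>i. mp_eval (l i) x)"
  by (rule mpoly_induct[where V=UNIV and F=F]) (auto simp: mp_subst_add mp_subst_mult mp_eval_add mp_eval_mult)

section \<open>Partial derivatives\<close>

lemma mp_pderiv_single:
  "mp_pderiv i (Poly_Mapping.single \<alpha> c)
     = Poly_Mapping.single (\<alpha> - Poly_Mapping.single i 1) (of_nat (Poly_Mapping.lookup \<alpha> i) * c)"
  by (cases "c = 0") (simp_all add: mp_pderiv_def mp_monom_def)

lemma mp_pderiv_add: "mp_pderiv i (A + B) = mp_pderiv i A + mp_pderiv i B"
proof -
  let ?S = "Poly_Mapping.keys A \<union> Poly_Mapping.keys B"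
  let ?f = "\<lambda>\<alpha> c. mp_monom (\<alpha> - Poly_Mapping.single i 1) (of_nat (Poly_Mapping.lookup \<alpha> i) * c)"
  have "mp_pderiv i (A + B) = (\<Sum>\<alpha>\<in>?S. ?f \<alpha> (Poly_Mapping.lookup (A + B) \<alpha>))"
    unfolding mp_pderiv_def
    by (rule sum_lookup_keys_superset[symmetric, where f="?f"]) (auto simp: mp_monom_def dest: keys_add[THEN subsetD])
  also have "\<dots> = (\<Sum>\<alpha>\<in>?S. ?f \<alpha> (Poly_Mapping.lookup A \<alpha>)) + (\<Sum>\<alpha>\<in>?S. ?f \<alpha> (Poly_Mapping.lookup B \<alpha>))"
    by (simp add: lookup_add distrib_left sum.distrib mp_monom_def single_add)
  also have "\<dots> = mp_pderiv i A + mp_pderiv i B"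
    unfolding mp_pderiv_def by (subst (1 2) sum_lookup_keys_superset[where f="?f"]) (auto simp: mp_monom_def)
  finally show ?thesis .
qed

lemma mp_pderiv_sum: "mp_pderiv i (sum f S) = (\<Sum>s\<in>S. mp_pderiv i (f s))"
  by (rule additive_sum) (rule mp_pderiv_add)

lemma mp_pderiv_const [simp]: "mp_pderiv i (mp_const c) = 0"
  by (simp add: mp_const_eq_single mp_pderiv_single)

lemma mp_pderiv_var: "mp_pderiv i (mp_var j) = (if i = j then 1 else 0)"
  by (auto simp: mp_var_eq_single mp_pderiv_single lookup_single)

lemma single_add_minus_single:
  fixes \<alpha> :: "nat \<Rightarrow>\<^sub>0 nat"
  assumes "Poly_Mapping.lookup \<alpha> i \<noteq> 0"
  shows "Poly_Mapping.single i 1 + (\<alpha> - Poly_Mapping.single i 1) = \<alpha>"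
  by (rule poly_mapping_eqI) (use assms in \<open>auto simp: lookup_add lookup_minus lookup_single when_def\<close>)

lemma mp_pderiv_mult_single:
  fixes a b :: "'a::comm_ring_1"
  shows "mp_pderiv i (Poly_Mapping.single \<alpha> a * Poly_Mapping.single \<beta> b)
    = mp_pderiv i (Poly_Mapping.single \<alpha> a) * Poly_Mapping.single \<beta> b
      + Poly_Mapping.single \<alpha> a * mp_pderiv i (Poly_Mapping.single \<beta> b)"
proof -
  let ?e = "Poly_Mapping.single i (1::nat)"
  have shift_left: "(\<alpha> - ?e) + \<beta> = (\<alpha> + \<beta>) - ?e" if "Poly_Mapping.lookup \<alpha> i \<noteq> 0"
    by (rule poly_mapping_eqI) (use that in \<open>auto simp: lookup_add lookup_minus lookup_single when_def\<close>)
  have shift_right: "\<alpha> + (\<beta> - ?e) = (\<alpha> + \<beta>) - ?e" if "Poly_Mapping.lookup \<beta> i \<noteq> 0"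
    by (rule poly_mapping_eqI) (use that in \<open>auto simp: lookup_add lookup_minus lookup_single when_def\<close>)
  have left: "mp_pderiv i (Poly_Mapping.single \<alpha> a) * Poly_Mapping.single \<beta> b
     = Poly_Mapping.single (\<alpha> + \<beta> - ?e) (of_nat (Poly_Mapping.lookup \<alpha> i) * (a * b))"
  proof (cases "Poly_Mapping.lookup \<alpha> i = 0")
    case False
    show ?thesis by (simp only: mp_pderiv_single mult_single shift_left[OF False] mult.assoc)
  qed (simp add: mp_pderiv_single)
  have right: "Poly_Mapping.single \<alpha> a * mp_pderiv i (Poly_Mapping.single \<beta> b)
     = Poly_Mapping.single (\<alpha> + \<beta> - ?e) (of_nat (Poly_Mapping.lookup \<beta> i) * (a * b))"
  proof (cases "Poly_Mapping.lookup \<beta> i = 0")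
    case False
    show ?thesis
      by (simp only: mp_pderiv_single mult_single shift_right[OF False]) (simp only: mult.left_commute)
  qed (simp add: mp_pderiv_single)
  have "mp_pderiv i (Poly_Mapping.single \<alpha> a * Poly_Mapping.single \<beta> b)
     = Poly_Mapping.single (\<alpha> + \<beta> - ?e) (of_nat (Poly_Mapping.lookup \<alpha> i) * (a * b))
       + Poly_Mapping.single (\<alpha> + \<beta> - ?e) (of_nat (Poly_Mapping.lookup \<beta> i) * (a * b))"
    by (simp add: mult_single mp_pderiv_single lookup_add distrib_right single_add)
  then show ?thesis by (simp only: left right)
qed

lemma mp_pderiv_mult: "mp_pderiv i (A * B) = mp_pderiv i A * B + A * mp_pderiv i (B::'a::comm_ring_1 mpoly)"
  by (rule poly_mapping_biadditive_eqI[where \<Phi>="\<lambda>A B. mp_pderiv i (A * B)"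
        and \<Psi>="\<lambda>A B. mp_pderiv i A * B + A * mp_pderiv i B"])
     (simp_all add: mp_pderiv_add distrib_left distrib_right mp_pderiv_mult_single)

lemma mp_pderiv_power:
  "mp_pderiv i (A ^ Suc n) = of_nat (Suc n) * A ^ n * mp_pderiv i (A::'a::comm_ring_1 mpoly)"
  by (induction n) (simp_all add: mp_pderiv_mult algebra_simps)

lemma mp_pderiv_const_mult: "mp_pderiv i (mp_const c * A) = mp_const c * mp_pderiv i A"
  by (simp add: mp_pderiv_mult)

lemma mp_map_pderiv:
  fixes g :: "'a::comm_ring_1 \<Rightarrow> 'b::comm_ring_1"
  assumes "g 0 = 0" "\<And>a b. g (a + b) = g a + g b" "\<And>a b. g (a * b) = g a * g b" "g 1 = 1"
  shows "mp_map g (mp_pderiv i A) = mp_pderiv i (mp_map g A)"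
proof -
  have of_nat: "g (of_nat n) = of_nat n" for n by (induction n) (simp_all add: assms)
  show ?thesis
    by (rule poly_mapping_additive_eqI[where \<Phi>="\<lambda>A. mp_map g (mp_pderiv i A)" and \<Psi>="\<lambda>A. mp_pderiv i (mp_map g A)"])
       (simp_all add: mp_pderiv_add mp_map_add assms mp_pderiv_single mp_map_single of_nat)
qed

lemma mp_pderiv_mp_subst:
  fixes F :: "'a::comm_ring_1 mpoly"
  assumes "finite V" "\<forall>\<alpha>\<in>Poly_Mapping.keys F. Poly_Mapping.keys \<alpha> \<subseteq> V"
  shows "mp_pderiv j (mp_subst F l) = (\<Sum>i\<in>V. mp_subst (mp_pderiv i F) l * mp_pderiv j (l i))"
proof (rule mpoly_induct[where V=V and F=F])
  show "mp_pderiv j (mp_subst (mp_var k) l) = (\<Sum>i\<in>V. mp_subst (mp_pderiv i (mp_var k)) l * mp_pderiv j (l i))"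
    if "k \<in> V" for k
  proof -
    have "(\<Sum>i\<in>V. mp_subst (mp_pderiv i (mp_var k)) l * mp_pderiv j (l i))
        = (\<Sum>i\<in>V. if i = k then mp_pderiv j (l k) else 0)"
      by (rule sum.cong) (auto simp: mp_pderiv_var)
    then show ?thesis using that assms(1) by simp
  qed
  show "mp_pderiv j (mp_subst (A * B) l) = (\<Sum>i\<in>V. mp_subst (mp_pderiv i (A * B)) l * mp_pderiv j (l i))"
    if "mp_pderiv j (mp_subst A l) = (\<Sum>i\<in>V. mp_subst (mp_pderiv i A) l * mp_pderiv j (l i))"
       "mp_pderiv j (mp_subst B l) = (\<Sum>i\<in>V. mp_subst (mp_pderiv i B) l * mp_pderiv j (l i))" for A B
  proof -
    have "(\<Sum>i\<in>V. mp_subst (mp_pderiv i (A * B)) l * mp_pderiv j (l i))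
      = (\<Sum>i\<in>V. (mp_subst (mp_pderiv i A) l * mp_pderiv j (l i)) * mp_subst B l
                  + mp_subst A l * (mp_subst (mp_pderiv i B) l * mp_pderiv j (l i)))"
      by (rule sum.cong) (simp_all add: mp_pderiv_mult mp_subst_add mp_subst_mult algebra_simps)
    also have "\<dots> = (\<Sum>i\<in>V. mp_subst (mp_pderiv i A) l * mp_pderiv j (l i)) * mp_subst B l
                  + mp_subst A l * (\<Sum>i\<in>V. mp_subst (mp_pderiv i B) l * mp_pderiv j (l i))"
      by (simp add: sum.distrib sum_distrib_left sum_distrib_right)
    also have "\<dots> = mp_pderiv j (mp_subst (A * B) l)"
      using that by (simp add: mp_subst_mult mp_pderiv_mult)
    finally show ?thesis by simp
  qed
qed (use assms in \<open>simp_all add: mp_subst_add mp_pderiv_add distrib_right sum.distrib\<close>)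

definition tdeg :: "(nat \<Rightarrow>\<^sub>0 nat) \<Rightarrow> nat" where
  "tdeg \<alpha> = (\<Sum>i\<in>Poly_Mapping.keys \<alpha>. Poly_Mapping.lookup \<alpha> i)"

lemma tdeg_superset:
  "finite S \<Longrightarrow> Poly_Mapping.keys \<alpha> \<subseteq> S \<Longrightarrow> (\<Sum>i\<in>S. Poly_Mapping.lookup \<alpha> i) = tdeg \<alpha>"
  unfolding tdeg_def by (rule sum.mono_neutral_right) (auto simp: in_keys_iff)

lemma single_sum: "Poly_Mapping.single \<alpha> (sum (f :: _ \<Rightarrow> 'a::comm_ring_1) S) = (\<Sum>s\<in>S. Poly_Mapping.single \<alpha> (f s))"
  by (rule additive_sum) (rule single_add)

lemma is_form_euler:
  fixes F :: "'a::comm_ring_1 mpoly"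
  assumes "is_form n d F"
  shows "(\<Sum>i\<le>n. mp_var i * mp_pderiv i F) = of_nat d * F"
proof -
  have monomial: "(\<Sum>i\<le>n. mp_var i * mp_pderiv i (Poly_Mapping.single \<alpha> c)) = of_nat d * Poly_Mapping.single \<alpha> c"
    if "\<alpha> \<in> Poly_Mapping.keys F" for \<alpha> and c :: 'a
  proof -
    have sub: "Poly_Mapping.keys \<alpha> \<subseteq> {..n}" and deg: "tdeg \<alpha> = d"
      using assms that unfolding is_form_def tdeg_def by auto
    have var_times: "mp_var i * mp_pderiv i (Poly_Mapping.single \<alpha> c)
        = Poly_Mapping.single \<alpha> (of_nat (Poly_Mapping.lookup \<alpha> i) * c)" for i
    proof (cases "Poly_Mapping.lookup \<alpha> i = 0")
      case False
      then have "Poly_Mapping.single i 1 + (\<alpha> - Poly_Mapping.single i 1) = \<alpha>"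
        by (rule single_add_minus_single)
      then show ?thesis by (simp add: mp_pderiv_single mp_var_eq_single mult_single)
    qed (simp add: mp_pderiv_single)
    have "(\<Sum>i\<le>n. mp_var i * mp_pderiv i (Poly_Mapping.single \<alpha> c))
        = Poly_Mapping.single \<alpha> (of_nat (\<Sum>i\<le>n. Poly_Mapping.lookup \<alpha> i) * c)"
      by (simp add: var_times sum_distrib_right single_sum)
    also have "(\<Sum>i\<le>n. Poly_Mapping.lookup \<alpha> i) = d"
      using tdeg_superset[OF _ sub] deg by simp
    finally show ?thesis
      by (simp add: mult_single flip: single_of_nat)
  qed
  have "(\<Sum>i\<le>n. mp_var i * mp_pderiv i F)
      = (\<Sum>i\<le>n. \<Sum>\<alpha>\<in>Poly_Mapping.keys F. mp_var i * mp_pderiv i (Poly_Mapping.single \<alpha> (Poly_Mapping.lookup F \<alpha>)))"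
    by (subst poly_mapping_eq_sum_single) (simp add: mp_pderiv_sum sum_distrib_left)
  also have "\<dots> = (\<Sum>\<alpha>\<in>Poly_Mapping.keys F. \<Sum>i\<le>n. mp_var i * mp_pderiv i (Poly_Mapping.single \<alpha> (Poly_Mapping.lookup F \<alpha>)))"
    by (rule sum.swap)
  also have "\<dots> = (\<Sum>\<alpha>\<in>Poly_Mapping.keys F. of_nat d * Poly_Mapping.single \<alpha> (Poly_Mapping.lookup F \<alpha>))"
    by (rule sum.cong) (auto simp: monomial)
  also have "\<dots> = of_nat d * (\<Sum>\<alpha>\<in>Poly_Mapping.keys F. Poly_Mapping.single \<alpha> (Poly_Mapping.lookup F \<alpha>))"
    by (simp add: sum_distrib_left)
  also have "\<dots> = of_nat d * F"
    by (simp flip: poly_mapping_eq_sum_single)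
  finally show ?thesis .
qed


section \<open>Total degree\<close>

lemma tdeg_add: "tdeg (\<alpha> + \<beta>) = tdeg \<alpha> + tdeg \<beta>"
proof -
  let ?S = "Poly_Mapping.keys \<alpha> \<union> Poly_Mapping.keys \<beta>"
  have "tdeg (\<alpha> + \<beta>) = (\<Sum>i\<in>?S. Poly_Mapping.lookup (\<alpha> + \<beta>) i)"
    by (rule tdeg_superset[symmetric]) (auto dest: keys_add[THEN subsetD])
  also have "\<dots> = (\<Sum>i\<in>?S. Poly_Mapping.lookup \<alpha> i) + (\<Sum>i\<in>?S. Poly_Mapping.lookup \<beta> i)"
    by (simp add: lookup_add sum.distrib)
  also have "\<dots> = tdeg \<alpha> + tdeg \<beta>"
    by (simp add: tdeg_superset)
  finally show ?thesis .
qed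

lemma tdeg_zero [simp]: "tdeg 0 = 0"
  by (simp add: tdeg_def)

lemma tdeg_single [simp]: "tdeg (Poly_Mapping.single i k) = k"
  by (simp add: tdeg_def)

lemma tdeg_eq_0_iff: "tdeg \<alpha> = 0 \<longleftrightarrow> \<alpha> = 0"
  by (auto simp: tdeg_def in_keys_iff intro: poly_mapping_eqI)

definition total_degree :: "'a::zero mpoly \<Rightarrow> nat" where
  "total_degree A = Max (insert 0 (tdeg ` Poly_Mapping.keys A))"

lemma total_degree_ge: "\<alpha> \<in> Poly_Mapping.keys A \<Longrightarrow> tdeg \<alpha> \<le> total_degree A"
  unfolding total_degree_def by (rule Max_ge) auto

lemma total_degree_le: "(\<And>\<alpha>. \<alpha> \<in> Poly_Mapping.keys A \<Longrightarrow> tdeg \<alpha> \<le> k) \<Longrightarrow> total_degree A \<le> k"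
  unfolding total_degree_def by (subst Max_le_iff) auto

lemma total_degree_attained:
  assumes "A \<noteq> 0"
  obtains \<alpha> where "\<alpha> \<in> Poly_Mapping.keys A" "tdeg \<alpha> = total_degree A"
proof -
  have ne: "tdeg ` Poly_Mapping.keys A \<noteq> {}" using assms by simp
  then have "Max (tdeg ` Poly_Mapping.keys A) \<in> tdeg ` Poly_Mapping.keys A"
    using Max_in[OF _ ne] by simp
  moreover have "total_degree A = Max (tdeg ` Poly_Mapping.keys A)"
    unfolding total_degree_def using ne by (subst Max_insert) auto
  ultimately show ?thesis using that by auto
qed

lemma total_degree_const [simp]: "total_degree (mp_const c) = 0"
  by (rule le_zero_eq[THEN iffD1], rule total_degree_le) (auto simp: mp_const_eq_single split: if_splits)

definition homog_comp :: "nat \<Rightarrow> 'a::comm_ring_1 mpoly \<Rightarrow> 'a mpoly" where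
  "homog_comp k A = (\<Sum>\<alpha>\<in>{\<alpha>\<in>Poly_Mapping.keys A. tdeg \<alpha> = k}. Poly_Mapping.single \<alpha> (Poly_Mapping.lookup A \<alpha>))"

lemma lookup_homog_comp:
  "Poly_Mapping.lookup (homog_comp k A) \<gamma> = (if tdeg \<gamma> = k then Poly_Mapping.lookup A \<gamma> else 0)"
proof -
  have "Poly_Mapping.lookup (homog_comp k A) \<gamma>
      = (\<Sum>\<alpha>\<in>{\<alpha>\<in>Poly_Mapping.keys A. tdeg \<alpha> = k}. if \<alpha> = \<gamma> then Poly_Mapping.lookup A \<alpha> else 0)"
    by (simp add: homog_comp_def lookup_sum lookup_single when_def)
  also have "\<dots> = (if \<gamma> \<in> {\<alpha>\<in>Poly_Mapping.keys A. tdeg \<alpha> = k} then Poly_Mapping.lookup A \<gamma> else 0)"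
    by (rule sum.delta) simp
  finally show ?thesis by (auto simp: in_keys_iff)
qed

lemma homog_comp_add: "homog_comp k (A + B) = homog_comp k A + homog_comp k B"
  by (rule poly_mapping_eqI) (simp add: lookup_homog_comp lookup_add)

lemma homog_comp_single:
  "homog_comp k (Poly_Mapping.single \<alpha> c) = (if tdeg \<alpha> = k then Poly_Mapping.single \<alpha> c else 0)"
  by (rule poly_mapping_eqI) (auto simp: lookup_homog_comp lookup_single when_def)

lemma homog_comp_total_degree_neq_0: "A \<noteq> 0 \<Longrightarrow> homog_comp (total_degree A) A \<noteq> 0"
  by (metis lookup_homog_comp lookup_zero total_degree_attained lookup_not_eq_zero_eq_in_keys)

lemma homog_comp_mult_top:
  fixes A B :: "'a::comm_ring_1 mpoly"
  assumes "\<And>\<alpha>. \<alpha> \<in> Poly_Mapping.keys A \<Longrightarrow> tdeg \<alpha> \<le> a" "\<And>\<beta>. \<beta> \<in> Poly_Mapping.keys B \<Longrightarrow> tdeg \<beta> \<le> b"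
  shows "homog_comp (a + b) (A * B) = homog_comp a A * homog_comp b B"
proof -
  let ?sA = "\<lambda>\<alpha>. Poly_Mapping.single \<alpha> (Poly_Mapping.lookup A \<alpha>)"
  let ?sB = "\<lambda>\<beta>. Poly_Mapping.single \<beta> (Poly_Mapping.lookup B \<beta>)"
  have homog_comp_sum: "homog_comp k (sum f S) = (\<Sum>s\<in>S. homog_comp k (f s))" for k and f :: "'x \<Rightarrow> 'a mpoly" and S
    by (rule additive_sum) (rule homog_comp_add)
  have "A * B = (\<Sum>\<alpha>\<in>Poly_Mapping.keys A. \<Sum>\<beta>\<in>Poly_Mapping.keys B. ?sA \<alpha> * ?sB \<beta>)"
    by (subst poly_mapping_eq_sum_single[of A], subst poly_mapping_eq_sum_single[of B]) (rule sum_product)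
  then have "homog_comp (a + b) (A * B)
      = (\<Sum>\<alpha>\<in>Poly_Mapping.keys A. \<Sum>\<beta>\<in>Poly_Mapping.keys B. homog_comp (a + b) (?sA \<alpha> * ?sB \<beta>))"
    by (simp add: homog_comp_sum)
  also have "\<dots> = (\<Sum>\<alpha>\<in>Poly_Mapping.keys A. \<Sum>\<beta>\<in>Poly_Mapping.keys B. homog_comp a (?sA \<alpha>) * homog_comp b (?sB \<beta>))"
  proof (intro sum.cong refl)
    fix \<alpha> \<beta> assume "\<alpha> \<in> Poly_Mapping.keys A" "\<beta> \<in> Poly_Mapping.keys B"
    then show "homog_comp (a + b) (?sA \<alpha> * ?sB \<beta>) = homog_comp a (?sA \<alpha>) * homog_comp b (?sB \<beta>)"
      using assms(1)[of \<alpha>] assms(2)[of \<beta>] by (auto simp: mult_single homog_comp_single tdeg_add)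
  qed
  also have "\<dots> = (\<Sum>\<alpha>\<in>Poly_Mapping.keys A. homog_comp a (?sA \<alpha>)) * (\<Sum>\<beta>\<in>Poly_Mapping.keys B. homog_comp b (?sB \<beta>))"
    by (rule sum_product[symmetric])
  also have "\<dots> = homog_comp a A * homog_comp b B"
    by (simp only: homog_comp_sum[symmetric]) (simp only: flip: poly_mapping_eq_sum_single)
  finally show ?thesis .
qed

lemma total_degree_mult:
  fixes A B :: "'a::idom mpoly"
  assumes "A \<noteq> 0" "B \<noteq> 0"
  shows "total_degree (A * B) = total_degree A + total_degree B"
proof (rule antisym)
  show "total_degree (A * B) \<le> total_degree A + total_degree B"
  proof (rule total_degree_le)
    fix \<gamma> assume "\<gamma> \<in> Poly_Mapping.keys (A * B)"
    then obtain \<alpha> \<beta> where "\<alpha> \<in> Poly_Mapping.keys A" "\<beta> \<in> Poly_Mapping.keys B" "\<gamma> = \<alpha> + \<beta>"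
      using keys_mult by blast
    then show "tdeg \<gamma> \<le> total_degree A + total_degree B" by (simp add: tdeg_add add_mono total_degree_ge)
  qed
  have "homog_comp (total_degree A + total_degree B) (A * B) = homog_comp (total_degree A) A * homog_comp (total_degree B) B"
    by (rule homog_comp_mult_top) (auto intro: total_degree_ge)
  also have "\<dots> \<noteq> 0"
    using assms by (simp add: homog_comp_total_degree_neq_0)
  finally obtain \<gamma> where "Poly_Mapping.lookup (homog_comp (total_degree A + total_degree B) (A * B)) \<gamma> \<noteq> 0"
    by (metis poly_mapping_eqI lookup_zero)
  then have "\<gamma> \<in> Poly_Mapping.keys (A * B)" "tdeg \<gamma> = total_degree A + total_degree B"
    by (auto simp: lookup_homog_comp in_keys_iff split: if_splits)
  then show "total_degree A + total_degree B \<le> total_degree (A * B)" by (metis total_degree_ge)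
qed

lemma total_degree_power: "(A::'a::idom mpoly) \<noteq> 0 \<Longrightarrow> total_degree (A ^ m) = m * total_degree A"
  by (induction m) (simp_all add: total_degree_mult flip: mp_const_1)

lemma total_degree_prod:
  "(\<And>s. s \<in> S \<Longrightarrow> f s \<noteq> 0) \<Longrightarrow> total_degree (prod f S :: 'a::idom mpoly) = (\<Sum>s\<in>S. total_degree (f s))"
  by (induction S rule: infinite_finite_induct) (simp_all add: total_degree_mult flip: mp_const_1)

lemma total_degree_eq_0_imp_const:
  assumes "total_degree A = 0"
  shows "A = mp_const (Poly_Mapping.lookup A 0)"
proof -
  have "Poly_Mapping.keys A \<subseteq> {0}"
    using total_degree_ge[of _ A] assms tdeg_eq_0_iff by fastforce
  then show ?thesis
    by (intro poly_mapping_eqI) (auto simp: mp_const_eq_single lookup_single when_def in_keys_iff)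
qed

lemma total_degree_mp_pderiv_less:
  assumes "mp_pderiv i A \<noteq> 0"
  shows "total_degree (mp_pderiv i A) < total_degree A"
proof -
  obtain \<gamma> where \<gamma>: "\<gamma> \<in> Poly_Mapping.keys (mp_pderiv i A)" "tdeg \<gamma> = total_degree (mp_pderiv i A)"
    using total_degree_attained[OF assms] by blast
  have "\<gamma> \<in> (\<Union>\<alpha>\<in>Poly_Mapping.keys A. Poly_Mapping.keys (mp_monom (\<alpha> - Poly_Mapping.single i 1)
            (of_nat (Poly_Mapping.lookup \<alpha> i) * Poly_Mapping.lookup A \<alpha>)))"
    using \<gamma>(1) unfolding mp_pderiv_def by (rule keys_sum[THEN subsetD])
  then obtain \<alpha> where \<alpha>: "\<alpha> \<in> Poly_Mapping.keys A"
    and nz: "of_nat (Poly_Mapping.lookup \<alpha> i) * Poly_Mapping.lookup A \<alpha> \<noteq> 0"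
    and \<gamma>_eq: "\<gamma> = \<alpha> - Poly_Mapping.single i 1"
    by (auto simp: mp_monom_def split: if_splits)
  from nz have "Poly_Mapping.lookup \<alpha> i \<noteq> 0" by (metis mult_zero_left of_nat_0)
  have "tdeg \<alpha> = tdeg (Poly_Mapping.single i 1 + (\<alpha> - Poly_Mapping.single i 1))"
    by (simp only: single_add_minus_single[OF \<open>Poly_Mapping.lookup \<alpha> i \<noteq> 0\<close>])
  also have "\<dots> = tdeg \<gamma> + 1"
    by (simp only: tdeg_add \<gamma>_eq tdeg_single add.commute)
  finally show ?thesis using \<gamma>(2) total_degree_ge[OF \<alpha>] by simp
qed

lemma mp_pderiv_eq_0_if_dvd:
  fixes G :: "'a::idom mpoly"
  assumes "G \<noteq> 0" "G dvd mp_pderiv i G"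
  shows "mp_pderiv i G = 0"
proof (rule ccontr)
  assume nz: "mp_pderiv i G \<noteq> 0"
  obtain C where C: "mp_pderiv i G = G * C" using assms(2) by (auto simp: dvd_def)
  then have "C \<noteq> 0" using nz by auto
  then have "total_degree (mp_pderiv i G) = total_degree G + total_degree C" using C assms(1) by (simp add: total_degree_mult)
  then show False using total_degree_mp_pderiv_less[OF nz] by simp
qed


section \<open>Linear forms\<close>

definition subst_multiple :: "nat \<Rightarrow> nat \<Rightarrow> 'a::comm_ring_1 \<Rightarrow> nat \<Rightarrow> 'a mpoly" where
  "subst_multiple i j c = (\<lambda>k. if k = i then mp_const c * mp_var j else mp_var k)"

lemma dvd_sub_mp_subst_multiple:
  fixes A :: "'a::comm_ring_1 mpoly"
  shows "(mp_var i - mp_const c * mp_var j) dvd A - mp_subst A (subst_multiple i j c)"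
proof (induction rule: mpoly_induct[where V=UNIV and F=A])
  case (3 A B)
  have "A + B - mp_subst (A + B) (subst_multiple i j c)
      = (A - mp_subst A (subst_multiple i j c)) + (B - mp_subst B (subst_multiple i j c))"
    by (simp add: mp_subst_add algebra_simps)
  then show ?case using 3 by (metis dvd_add)
next
  case (4 A B)
  have "A * B - mp_subst (A * B) (subst_multiple i j c)
      = (A - mp_subst A (subst_multiple i j c)) * B
        + mp_subst A (subst_multiple i j c) * (B - mp_subst B (subst_multiple i j c))"
    by (simp add: mp_subst_mult algebra_simps)
  then show ?case using 4 by (metis dvd_add dvd_mult dvd_mult2)
qed (auto simp: subst_multiple_def)

lemma dvd_iff_mp_subst_multiple_eq_0:
  fixes A :: "'a::comm_ring_1 mpoly"
  assumes "i \<noteq> j"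
  shows "(mp_var i - mp_const c * mp_var j) dvd A \<longleftrightarrow> mp_subst A (subst_multiple i j c) = 0"
proof
  assume "(mp_var i - mp_const c * mp_var j) dvd A"
  then obtain C where "A = (mp_var i - mp_const c * mp_var j) * C" by (auto simp: dvd_def)
  then show "mp_subst A (subst_multiple i j c) = 0"
    using assms by (simp add: mp_subst_mult mp_subst_diff subst_multiple_def)
next
  assume "mp_subst A (subst_multiple i j c) = 0"
  then show "(mp_var i - mp_const c * mp_var j) dvd A"
    using dvd_sub_mp_subst_multiple[of i c j A] by simp
qed

lemma var_minus_scaled_var_dvd_multD:
  fixes A B :: "'a::idom mpoly"
  assumes "i \<noteq> j" "(mp_var i - mp_const c * mp_var j) dvd A * B"
  shows "(mp_var i - mp_const c * mp_var j) dvd A \<or> (mp_var i - mp_const c * mp_var j) dvd B"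
  using assms by (simp add: dvd_iff_mp_subst_multiple_eq_0 mp_subst_mult)

definition linform :: "'a::comm_ring_1 \<Rightarrow> 'a \<Rightarrow> 'a mpoly" where
  "linform a b = mp_const a * mp_var 0 + mp_const b * mp_var 1"

lemma linform_eq_single:
  "linform a b = Poly_Mapping.single (Poly_Mapping.single 0 1) a + Poly_Mapping.single (Poly_Mapping.single 1 1) b"
  by (simp add: linform_def mp_const_eq_single mp_var_eq_single mult_single)

lemma mp_eval_linform [simp]: "mp_eval (linform a b) x = a * x 0 + b * x 1"
  by (simp add: linform_def mp_eval_add mp_eval_mult)

lemma mp_pderiv_linform:
  "mp_pderiv j (linform a b) = (if j = 0 then mp_const a else if j = 1 then mp_const b else 0)"
  by (simp add: linform_def mp_pderiv_add mp_pderiv_const_mult mp_pderiv_var)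

lemma linform_neq_0:
  assumes "a \<noteq> 0 \<or> b \<noteq> 0"
  shows "linform a b \<noteq> 0"
proof -
  have "Poly_Mapping.single (0::nat) (1::nat) \<noteq> Poly_Mapping.single 1 1"
    by (metis lookup_single_eq lookup_single_not_eq zero_neq_one)
  then have "Poly_Mapping.lookup (linform a b) (Poly_Mapping.single 0 1) = a"
    "Poly_Mapping.lookup (linform a b) (Poly_Mapping.single 1 1) = b"
    by (simp_all add: linform_eq_single lookup_add lookup_single_not_eq)
  then show ?thesis using assms by auto
qed

lemma total_degree_linform:
  assumes "a \<noteq> 0 \<or> b \<noteq> 0"
  shows "total_degree (linform a b) = 1"
proof -
  have keys: "Poly_Mapping.keys (linform a b) \<subseteq> {Poly_Mapping.single 0 1, Poly_Mapping.single 1 1}"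
    unfolding linform_eq_single by (rule order.trans[OF keys_add]) auto
  obtain \<alpha> where "\<alpha> \<in> Poly_Mapping.keys (linform a b)" "tdeg \<alpha> = total_degree (linform a b)"
    using total_degree_attained[OF linform_neq_0[OF assms]] by blast
  then show ?thesis using keys by auto
qed

lemma prime_elem_linform:
  fixes a b :: "'a::field"
  assumes "a \<noteq> 0 \<or> b \<noteq> 0"
  shows "prime_elem (linform a b)"
proof (rule prime_elemI)
  show "linform a b \<noteq> 0" by (rule linform_neq_0[OF assms])
  show "\<not> linform a b dvd 1"
  proof
    assume "linform a b dvd 1"
    then obtain C where "1 = linform a b * C" by (auto simp: dvd_def)
    then have "total_degree (1::'a mpoly) = 1 + total_degree C"
      by (metis total_degree_linform[OF assms] total_degree_mult linform_neq_0[OF assms] mult_zero_right zero_neq_one)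
    then show False by (simp flip: mp_const_1)
  qed
  show "linform a b dvd A \<or> linform a b dvd B" if "linform a b dvd A * B" for A B
  proof (cases "b = 0")
    case True
    then have "linform a b = mp_const a * (mp_var 0 - mp_const 0 * mp_var 1)"
      by (simp add: linform_def)
    then show ?thesis
      using that assms True var_minus_scaled_var_dvd_multD[of 0 1 0 A B] by (simp add: mp_const_mult_dvd_iff)
  next
    case False
    then have "linform a b = mp_const b * (mp_var 1 - mp_const (- a / b) * mp_var 0)"
      by (simp add: linform_def algebra_simps mp_const_uminus flip: mp_const_mult)
    then show ?thesis
      using that False var_minus_scaled_var_dvd_multD[of 1 0 "- a / b" A B] by (simp add: mp_const_mult_dvd_iff)
  qed
qed

lemma prime_elem_dvd_cancel_left:
  fixes L G E :: "'a::idom"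
  assumes "prime_elem L" "\<not> L dvd G" "G dvd L * E"
  shows "G dvd E"
proof -
  obtain H where H: "L * E = G * H" using assms(3) by (auto simp: dvd_def)
  then have "L dvd G * H" by (metis dvd_triv_left)
  then have "L dvd H" using assms(1,2) prime_elem_dvd_mult_iff by blast
  then obtain H' where "H = L * H'" by (auto simp: dvd_def)
  with H have "L * E = L * (G * H')" by (simp only: mult.left_commute)
  moreover have "L \<noteq> 0" using assms(1) unfolding prime_elem_def by blast
  ultimately have "E = G * H'" by simp
  then show ?thesis by simp
qed

lemma prod_prime_elems_dvd_cancel_left:
  fixes G Y :: "'a::idom"
  assumes "finite S" "\<And>s. s \<in> S \<Longrightarrow> prime_elem (f s) \<and> \<not> f s dvd G" "G dvd (\<Prod>s\<in>S. f s) * Y"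
  shows "G dvd Y"
  using assms
proof (induction S arbitrary: Y rule: finite_induct)
  case (insert s S)
  have "G dvd f s * ((\<Prod>s\<in>S. f s) * Y)"
    using insert.prems(2) insert.hyps by (simp add: mult.assoc)
  moreover have "prime_elem (f s)" "\<not> f s dvd G" using insert.prems(1) by auto
  ultimately have "G dvd (\<Prod>s\<in>S. f s) * Y" by (metis prime_elem_dvd_cancel_left)
  then show ?case by (rule insert.IH[rotated]) (use insert.prems(1) in auto)
qed simp

section \<open>Finite fields\<close>

lemma card_finite_field_ge_2: "2 \<le> CARD('a::{finite,field})"
proof -
  have "card {0::'a, 1} \<le> CARD('a)" by (rule card_mono) auto
  then show ?thesis by simp
qed

lemma power_card_eq_self: "(x::'a::{finite,field}) ^ CARD('a) = x"
proof (cases "x = 0")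
  case True
  have "0 < CARD('a)" by auto
  then show ?thesis unfolding True by (rule zero_power)
next
  case False
  let ?U = "UNIV - {0::'a}"
  have "bij_betw ((*) x) ?U ?U"
    by (rule bij_betw_byWitness[where f'="\<lambda>y. y / x"]) (use False in auto)
  then have "(\<Prod>y\<in>?U. x * y) = \<Prod>?U"
    by (rule prod.reindex_bij_betw)
  then have "x ^ card ?U * \<Prod>?U = 1 * \<Prod>?U"
    by (simp add: prod.distrib)
  moreover have "\<Prod>?U \<noteq> 0"
    by simp
  ultimately have "x ^ card ?U = 1"
    by (metis mult_cancel_right)
  moreover have "CARD('a) = Suc (card ?U)"
    by (rule card_Suc_Diff1[symmetric]) simp_all
  ultimately show ?thesis
    by (simp only: power_Suc mult_1_right)
qed

text \<open>The binomial coefficients C(q, k), 0 < k < q, vanish in a field with q elements: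
  the polynomial sum of C(q,k) t^k over 0 < k < q has degree below q but vanishes at every t,
  because (t + 1)^q = t + 1 = t^q + 1.\<close>

lemma of_nat_card_choose_eq_0:
  assumes "0 < k" "k < CARD('a::{finite,field})"
  shows "of_nat (CARD('a) choose k) = (0::'a)"
proof -
  define q where "q = CARD('a)"
  have q2: "2 \<le> q" unfolding q_def by (rule card_finite_field_ge_2)
  define g where "g i = (if 0 < i \<and> i < q then of_nat (q choose i) else (0::'a))" for i
  define f where "f = (\<Sum>i\<le>q. monom (g i) i)"
  have coeff_f: "coeff f n = (if n \<le> q then g n else 0)" for n
    by (cases "n \<le> q") (simp_all add: f_def coeff_sum_monom coeff_sum coeff_monom)
  have "degree f \<le> q - 1"
    by (rule degree_le) (auto simp: coeff_f g_def)
  have root: "poly f t = 0" for t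
  proof -
    have "poly f t = (\<Sum>i\<le>q. of_nat (q choose i) * t ^ i - (if i = 0 then 1 else 0) - (if i = q then t ^ q else 0))"
      unfolding f_def poly_sum poly_monom by (rule sum.cong) (use q2 in \<open>auto simp: g_def\<close>)
    also have "\<dots> = (t + 1) ^ q - 1 - t ^ q"
      by (simp add: sum_subtractf binomial_ring)
    also have "\<dots> = 0"
      by (simp add: q_def power_card_eq_self)
    finally show ?thesis .
  qed
  have "f = 0"
  proof (rule ccontr)
    assume "f \<noteq> 0"
    then have "card {x. poly f x = 0} \<le> degree f" by (rule card_poly_roots_bound)
    also have "{x. poly f x = 0} = (UNIV :: 'a set)" using root by auto
    finally show False using \<open>degree f \<le> q - 1\<close> q2 unfolding q_def by simp
  qed
  then have "coeff f k = 0" by simp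
  then show ?thesis using assms unfolding coeff_f g_def q_def by simp
qed

lemma mpoly_power_card_add:
  fixes A B :: "'a::{finite,field} mpoly"
  shows "(A + B) ^ CARD('a) = A ^ CARD('a) + B ^ CARD('a)"
proof -
  let ?q = "CARD('a)"
  have "(A + B) ^ ?q = (\<Sum>k\<le>?q. of_nat (?q choose k) * A ^ k * B ^ (?q - k))"
    by (rule binomial_ring)
  also have "\<dots> = (\<Sum>k\<in>{0, ?q}. of_nat (?q choose k) * A ^ k * B ^ (?q - k))"
  proof (rule sum.mono_neutral_right)
    show "\<forall>k\<in>{..?q} - {0, ?q}. of_nat (?q choose k) * A ^ k * B ^ (?q - k) = 0"
      using of_nat_card_choose_eq_0[where 'a='a] by (auto simp flip: mp_const_of_nat)
  qed auto
  finally show ?thesis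
    using card_finite_field_ge_2[where 'a='a] by (simp add: add.commute)
qed

lemma linform_power_card:
  fixes a b :: "'a::{finite,field}"
  shows "linform a b ^ CARD('a) = mp_const a * mp_var 0 ^ CARD('a) + mp_const b * mp_var 1 ^ CARD('a)"
  by (simp add: linform_def mpoly_power_card_add power_mult_distrib power_card_eq_self flip: mp_const_power)

lemma prime_CHAR_finite_field: "prime CHAR('a::{finite,field})"
  by (rule prime_CHAR_semidom) (rule finite_imp_CHAR_pos, simp)

lemma exists_CHAR_root: "\<exists>r. r ^ CHAR('a) = (c::'a::{finite,field})"
proof -
  have "inj (\<lambda>x::'a. x ^ CHAR('a))"
  proof (rule injI)
    fix x y :: 'a
    assume "x ^ CHAR('a) = y ^ CHAR('a)"
    moreover have "x ^ CHAR('a) = (x - y) ^ CHAR('a) + y ^ CHAR('a)"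
      using freshmans_dream[OF prime_CHAR_finite_field refl, of "x - y" y] by simp
    ultimately have "(x - y) ^ CHAR('a) = 0" by simp
    then show "x = y" by simp
  qed
  then have "surj (\<lambda>x::'a. x ^ CHAR('a))" by (simp add: finite_UNIV_inj_surj)
  then show ?thesis by (metis surjD)
qed

lemma power_card_fixed_imp_in_range_to_ac:
  fixes u :: "'a::{finite,field} alg_closure"
  assumes "u ^ CARD('a) = u"
  shows "u \<in> range to_ac"
proof -
  define q where "q = CARD('a)"
  have q2: "2 \<le> q" unfolding q_def by (rule card_finite_field_ge_2)
  define r where "r = monom (1::'a alg_closure) q - [:0, 1:]"
  have poly_r: "poly r x = x ^ q - x" for x by (simp add: r_def poly_monom)
  have "coeff r q = 1" using q2 by (simp add: r_def coeff_monom coeff_pCons split: nat.split)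
  then have "r \<noteq> 0" by auto
  have "degree r \<le> q"
    by (rule degree_le) (use q2 in \<open>auto simp: r_def coeff_monom coeff_pCons split: nat.splits\<close>)
  have sub: "range to_ac \<subseteq> {x. poly r x = 0}"
    by (auto simp: poly_r q_def power_card_eq_self simp flip: to_ac_power)
  have fin: "finite {x. poly r x = 0}" by (rule poly_roots_finite[OF \<open>r \<noteq> 0\<close>])
  have "card {x. poly r x = 0} \<le> q"
    using card_poly_roots_bound[OF \<open>r \<noteq> 0\<close>] \<open>degree r \<le> q\<close> by simp
  moreover have "card (range (to_ac :: 'a \<Rightarrow> _)) = q"
    unfolding q_def by (simp add: card_image inj_to_ac)
  ultimately have "range to_ac = {x. poly r x = 0}"
    using card_subset_eq[OF fin sub] card_mono[OF fin sub] by simp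
  then show ?thesis using assms by (simp add: poly_r q_def)
qed


section \<open>Polynomials with vanishing partial derivatives\<close>

lemma lookup_mp_pderiv_minus_single:
  fixes A :: "'a::comm_ring_1 mpoly"
  assumes "Poly_Mapping.lookup \<alpha> i \<noteq> 0"
  shows "Poly_Mapping.lookup (mp_pderiv i A) (\<alpha> - Poly_Mapping.single i 1)
           = of_nat (Poly_Mapping.lookup \<alpha> i) * Poly_Mapping.lookup A \<alpha>"
proof -
  let ?e = "Poly_Mapping.single i (1::nat)"
  have "Poly_Mapping.lookup (mp_pderiv i A) (\<alpha> - ?e)
      = (\<Sum>\<beta>\<in>Poly_Mapping.keys A. (of_nat (Poly_Mapping.lookup \<beta> i) * Poly_Mapping.lookup A \<beta> when \<beta> - ?e = \<alpha> - ?e))"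
    by (simp add: mp_pderiv_def mp_monom_def lookup_sum lookup_single)
  also have "\<dots> = (\<Sum>\<beta>\<in>Poly_Mapping.keys A. if \<beta> = \<alpha> then of_nat (Poly_Mapping.lookup \<alpha> i) * Poly_Mapping.lookup A \<alpha> else 0)"
  proof (rule sum.cong[OF refl])
    fix \<beta>
    have "\<beta> = \<alpha>" if "Poly_Mapping.lookup \<beta> i \<noteq> 0" "\<beta> - ?e = \<alpha> - ?e"
      using single_add_minus_single[OF that(1)] single_add_minus_single[OF assms] that(2) by metis
    then show "(of_nat (Poly_Mapping.lookup \<beta> i) * Poly_Mapping.lookup A \<beta> when \<beta> - ?e = \<alpha> - ?e)
        = (if \<beta> = \<alpha> then of_nat (Poly_Mapping.lookup \<alpha> i) * Poly_Mapping.lookup A \<alpha> else 0)"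
      by (cases "Poly_Mapping.lookup \<beta> i = 0") (auto simp: when_def)
  qed
  also have "\<dots> = of_nat (Poly_Mapping.lookup \<alpha> i) * Poly_Mapping.lookup A \<alpha>"
    by (simp add: in_keys_iff)
  finally show ?thesis .
qed

lemma CHAR_mpoly: "CHAR('a::comm_ring_1 mpoly) = CHAR('a)"
proof (rule CHAR_eqI)
  show "of_nat CHAR('a) = (0::'a mpoly)" by (simp flip: mp_const_of_nat)
  show "CHAR('a) dvd n" if "of_nat n = (0::'a mpoly)" for n
    using that by (simp add: of_nat_eq_0_iff_char_dvd flip: mp_const_of_nat)
qed

lemma CHAR_dvd_exponents_if_mp_pderivs_eq_0:
  fixes G :: "'a::idom mpoly"
  assumes "\<And>i. mp_pderiv i G = 0" "\<alpha> \<in> Poly_Mapping.keys G"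
  shows "CHAR('a) dvd Poly_Mapping.lookup \<alpha> i"
proof (cases "Poly_Mapping.lookup \<alpha> i = 0")
  case False
  have "of_nat (Poly_Mapping.lookup \<alpha> i) * Poly_Mapping.lookup G \<alpha> = (0::'a)"
    using lookup_mp_pderiv_minus_single[OF False, of G] assms(1) by simp
  then show ?thesis using assms(2) by (simp add: in_keys_iff of_nat_eq_0_iff_char_dvd)
qed simp

text \<open>Take the p-th root of every coefficient and divide every exponent by p; the p-th power
  map is additive in characteristic p.\<close>

lemma pth_power_if_CHAR_dvd_exponents:
  fixes G :: "'a::{finite,field} mpoly"
  assumes "\<And>\<alpha> i. \<alpha> \<in> Poly_Mapping.keys G \<Longrightarrow> CHAR('a) dvd Poly_Mapping.lookup \<alpha> i"
  shows "\<exists>H. G = H ^ CHAR('a)"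
proof -
  let ?p = "CHAR('a)"
  define root_exp where "root_exp \<alpha> = Poly_Mapping.map (\<lambda>n. n div ?p) \<alpha>" for \<alpha> :: "nat \<Rightarrow>\<^sub>0 nat"
  define root where "root c = (SOME r. r ^ ?p = c)" for c :: 'a
  have root: "root c ^ ?p = c" for c
    unfolding root_def by (rule someI_ex) (rule exists_CHAR_root)
  have root_exp: "(\<Sum>j<?p. root_exp \<alpha>) = \<alpha>" if "\<alpha> \<in> Poly_Mapping.keys G" for \<alpha>
  proof (rule poly_mapping_eqI)
    fix i
    have "Poly_Mapping.lookup (\<Sum>j<?p. root_exp \<alpha>) i = ?p * (Poly_Mapping.lookup \<alpha> i div ?p)"
      by (simp only: lookup_sum) (simp add: root_exp_def lookup_map)
    also have "\<dots> = Poly_Mapping.lookup \<alpha> i" using assms[OF that, of i] by simp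
    finally show "Poly_Mapping.lookup (\<Sum>j<?p. root_exp \<alpha>) i = Poly_Mapping.lookup \<alpha> i" .
  qed
  define H where
    "H = (\<Sum>\<alpha>\<in>Poly_Mapping.keys G. Poly_Mapping.single (root_exp \<alpha>) (root (Poly_Mapping.lookup G \<alpha>)))"
  have "prime CHAR('a mpoly)" by (simp add: CHAR_mpoly prime_CHAR_finite_field)
  then have "H ^ ?p = (\<Sum>\<alpha>\<in>Poly_Mapping.keys G. Poly_Mapping.single (root_exp \<alpha>) (root (Poly_Mapping.lookup G \<alpha>)) ^ ?p)"
    unfolding H_def by (rule freshmans_dream_sum) (simp add: CHAR_mpoly)
  also have "\<dots> = (\<Sum>\<alpha>\<in>Poly_Mapping.keys G. Poly_Mapping.single \<alpha> (Poly_Mapping.lookup G \<alpha>))"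
    by (rule sum.cong[OF refl]) (simp add: single_power root_exp root del: sum_constant)
  also have "\<dots> = G" by (rule poly_mapping_eq_sum_single[symmetric])
  finally show ?thesis by metis
qed

section \<open>The Moore form\<close>

text \<open>The Moore determinant of x_0 and x_1; for q = CARD('a) it is, up to a unit, the product
  of the linear forms of all 'a-rational points of the projective line.\<close>

definition moore_form :: "nat \<Rightarrow> 'a::comm_ring_1 mpoly" where
  "moore_form q = mp_var 0 * mp_var 1 ^ q - mp_var 0 ^ q * mp_var 1"

lemma moore_form_eq_single:
  "moore_form q = Poly_Mapping.single (Poly_Mapping.single 0 1 + Poly_Mapping.single 1 q) (1::'a::comm_ring_1)
     - Poly_Mapping.single (Poly_Mapping.single 0 q + Poly_Mapping.single 1 1) 1"
  by (simp only: moore_form_def mp_var_power) (simp add: mp_var_eq_single mult_single)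

lemma moore_form_neq_0: "2 \<le> q \<Longrightarrow> moore_form q \<noteq> (0::'a::comm_ring_1 mpoly)"
proof
  assume q: "2 \<le> q" and zero: "moore_form q = (0::'a mpoly)"
  let ?m1 = "Poly_Mapping.single 0 1 + Poly_Mapping.single 1 q :: nat \<Rightarrow>\<^sub>0 nat"
  let ?m2 = "Poly_Mapping.single 0 q + Poly_Mapping.single 1 1 :: nat \<Rightarrow>\<^sub>0 nat"
  have "Poly_Mapping.lookup ?m1 0 \<noteq> Poly_Mapping.lookup ?m2 0" using q by (simp add: lookup_add lookup_single)
  then have "?m2 \<noteq> ?m1" by metis
  then have "Poly_Mapping.lookup (moore_form q :: 'a mpoly) ?m1 = 1"
    by (simp add: moore_form_eq_single lookup_minus lookup_single_not_eq)
  then show False using zero by simp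
qed

lemma total_degree_moore_form_le: "total_degree (moore_form q :: 'a::comm_ring_1 mpoly) \<le> q + 1"
proof (rule total_degree_le)
  fix \<alpha> assume "\<alpha> \<in> Poly_Mapping.keys (moore_form q :: 'a mpoly)"
  then have "\<alpha> \<in> Poly_Mapping.keys (Poly_Mapping.single (Poly_Mapping.single 0 1 + Poly_Mapping.single 1 q) (1::'a))
     \<union> Poly_Mapping.keys (Poly_Mapping.single (Poly_Mapping.single 0 q + Poly_Mapping.single 1 (1::nat)) (1::'a))"
    unfolding moore_form_eq_single by (rule keys_diff[THEN subsetD])
  then show "tdeg \<alpha> \<le> q + 1" by (auto simp: tdeg_add split: if_splits)
qed

lemma linform_uminus_1: "linform (- c) 1 = mp_var 1 - mp_const c * mp_var 0"
  by (simp add: linform_def mp_const_uminus)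

lemma prod_linforms_dvd:
  fixes A :: "'a::field mpoly"
  assumes "finite S" "\<And>c. c \<in> S \<Longrightarrow> mp_subst A (subst_multiple 1 0 c) = 0"
  shows "(\<Prod>c\<in>S. linform (- c) 1) dvd A"
  using assms
proof (induction S rule: finite_induct)
  case (insert c S)
  then obtain B where B: "A = (\<Prod>c\<in>S. linform (- c) 1) * B" by (auto simp: dvd_def)
  have "mp_subst (linform (- c') 1) (subst_multiple 1 0 c) = mp_const (c - c') * mp_var 0" for c'
    by (simp add: linform_uminus_1 subst_multiple_def mp_subst_diff mp_subst_mult mp_const_diff algebra_simps)
  then have "mp_subst (\<Prod>c\<in>S. linform (- c) 1) (subst_multiple 1 0 c) \<noteq> 0"
    using insert.hyps by (auto simp: mp_subst_prod prod_zero_iff)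
  moreover have "mp_subst A (subst_multiple 1 0 c) = 0" using insert.prems by simp
  ultimately have "mp_subst B (subst_multiple 1 0 c) = 0" by (simp add: B mp_subst_mult)
  then have "linform (- c) 1 dvd B" by (simp add: linform_uminus_1 dvd_iff_mp_subst_multiple_eq_0)
  then obtain B' where "B = linform (- c) 1 * B'" by (auto simp: dvd_def)
  then have "A = (\<Prod>c\<in>insert c S. linform (- c) 1) * B'" using B insert.hyps by (simp add: ac_simps)
  then show ?case by simp
qed simp

lemma moore_form_factorization:
  "\<exists>u. u \<noteq> 0 \<and> moore_form CARD('a) = mp_var 0 * (\<Prod>c\<in>(UNIV::'a::{finite,field} set). linform (- c) 1) * mp_const u"
proof -
  let ?q = "CARD('a)"
  let ?P = "\<Prod>c\<in>(UNIV::'a set). linform (- c) 1"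
  have q2: "2 \<le> ?q" by (rule card_finite_field_ge_2)
  have "?P dvd moore_form ?q"
  proof (rule prod_linforms_dvd)
    fix c :: 'a
    have "mp_subst (moore_form ?q) (subst_multiple 1 0 c)
        = mp_var 0 * (mp_const c * mp_var 0) ^ ?q - mp_var 0 ^ ?q * (mp_const c * mp_var 0)"
      by (simp add: moore_form_def subst_multiple_def mp_subst_diff mp_subst_mult mp_subst_power)
    also have "\<dots> = 0"
      by (simp add: power_mult_distrib power_card_eq_self algebra_simps flip: mp_const_power)
    finally show "mp_subst (moore_form ?q) (subst_multiple 1 0 c) = 0" .
  qed simp
  then obtain B where B: "moore_form ?q = ?P * B" by (auto simp: dvd_def)
  have "mp_subst (moore_form ?q) (subst_multiple 0 1 (0::'a)) = 0"
    using q2 by (simp add: moore_form_def subst_multiple_def mp_subst_diff mp_subst_mult mp_subst_power)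
  moreover have "mp_subst ?P (subst_multiple 0 1 (0::'a)) \<noteq> 0"
    by (simp add: mp_subst_prod linform_def subst_multiple_def mp_subst_add mp_subst_mult prod_zero_iff)
  ultimately have "mp_subst B (subst_multiple 0 1 (0::'a)) = 0" by (simp add: B mp_subst_mult)
  then have "mp_var 0 dvd B" using dvd_iff_mp_subst_multiple_eq_0[of 0 1 "0::'a" B] by simp
  then obtain u where u: "B = mp_var 0 * u" by (auto simp: dvd_def)
  have R: "moore_form ?q = mp_var 0 * ?P * u" using B u by (simp add: ac_simps)
  then have "u \<noteq> 0" and "?P \<noteq> 0" using moore_form_neq_0[OF q2] by (auto simp: linform_neq_0)
  have deg_x0: "total_degree (mp_var 0 :: 'a mpoly) = 1"
    using total_degree_linform[of "1::'a" 0] by (simp add: linform_def)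
  have "total_degree ?P = (\<Sum>c\<in>(UNIV::'a set). total_degree (linform (- c) 1))"
    by (rule total_degree_prod) (simp add: linform_neq_0)
  then have "total_degree ?P = ?q" by (simp add: total_degree_linform)
  then have "total_degree (moore_form ?q :: 'a mpoly) = 1 + ?q + total_degree u"
    using R \<open>u \<noteq> 0\<close> \<open>?P \<noteq> 0\<close> by (simp add: total_degree_mult deg_x0)
  then have "total_degree u = 0" using total_degree_moore_form_le[of ?q, where 'a='a] by simp
  then have "u = mp_const (Poly_Mapping.lookup u 0)" by (rule total_degree_eq_0_imp_const)
  then show ?thesis using R \<open>u \<noteq> 0\<close> by (metis mp_const_0)
qed

lemma linform_dvd_moore_form_imp_rational:
  fixes s t :: "'a::{finite,field} alg_closure"
  assumes "s \<noteq> 0 \<or> t \<noteq> 0" "linform t (- s) dvd moore_form CARD('a)"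
  obtains c a b where "c \<noteq> 0" "s = c * to_ac a" "t = c * to_ac b"
proof -
  obtain C where "moore_form CARD('a) = linform t (- s) * C"
    using assms(2) by (auto simp: dvd_def)
  then have "mp_eval (moore_form CARD('a)) (\<lambda>k. if k = 0 then s else t) = 0"
    by (simp add: mp_eval_mult)
  then have fixed: "s * t ^ CARD('a) = s ^ CARD('a) * t"
    by (simp add: moore_form_def mp_eval_diff mp_eval_mult mp_eval_power)
  show ?thesis
  proof (cases "s = 0")
    case True
    then show ?thesis using assms(1) that[of t 0 1] by simp
  next
    case False
    with fixed have "(t / s) ^ CARD('a) = t / s"
      by (simp add: power_divide field_simps)
    then obtain b where "t / s = to_ac b" using power_card_fixed_imp_in_range_to_ac by blast
    then show ?thesis using False that[of s 1 b] by (simp add: field_simps)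
  qed
qed


section \<open>Restriction to a line\<close>

lemma restrict_line_eq_mp_subst: "restrict_line F P Q = mp_subst F (\<lambda>i. linform (P i) (Q i))"
  by (simp add: restrict_line_def linform_def)

lemma mp_eval_restrict_line:
  "mp_eval (restrict_line F P Q) y = mp_eval F (\<lambda>i. y 0 * P i + y 1 * Q i)"
  by (simp add: restrict_line_eq_mp_subst mp_eval_subst mult.commute)

lemma mp_pderiv_restrict_line:
  assumes "is_form n d F"
  shows "mp_pderiv j (restrict_line F P Q)
           = (\<Sum>i\<le>n. mp_subst (mp_pderiv i F) (\<lambda>i. linform (P i) (Q i)) * mp_pderiv j (linform (P i) (Q i)))"
  unfolding restrict_line_eq_mp_subst
  by (rule mp_pderiv_mp_subst) (use assms in \<open>auto simp: is_form_def\<close>)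

lemma restrict_line_euler:
  assumes "is_form n d F"
  shows "mp_var 0 * mp_pderiv 0 (restrict_line F P Q) + mp_var 1 * mp_pderiv 1 (restrict_line F P Q)
           = of_nat d * restrict_line F P Q"
proof -
  let ?s = "\<lambda>A. mp_subst A (\<lambda>i. linform (P i) (Q i))"
  have "of_nat d * restrict_line F P Q = ?s (\<Sum>i\<le>n. mp_var i * mp_pderiv i F)"
    by (simp add: is_form_euler[OF assms] restrict_line_eq_mp_subst mp_subst_mult)
  also have "\<dots> = (\<Sum>i\<le>n. linform (P i) (Q i) * ?s (mp_pderiv i F))"
    by (simp add: mp_subst_sum mp_subst_mult)
  also have "\<dots> = mp_var 0 * mp_pderiv 0 (restrict_line F P Q) + mp_var 1 * mp_pderiv 1 (restrict_line F P Q)"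
    by (simp only: mp_pderiv_restrict_line[OF assms] mp_pderiv_linform)
       (simp add: linform_def sum_distrib_left sum.distrib algebra_simps)
  finally show ?thesis by simp
qed

text \<open>(P_i x_0 + Q_i x_1)^q = P_i x_0^q + Q_i x_1^q, as the coordinates of P and Q are fixed by
  the q-th power.\<close>

lemma restrict_line_frobenius:
  fixes F :: "'a::{finite,field} mpoly"
  assumes "is_form n d F" "(\<Sum>i\<le>n. mp_var i ^ CARD('a) * mp_pderiv i F) = F * H"
  shows "restrict_line F P Q * mp_subst H (\<lambda>i. linform (P i) (Q i))
           = mp_var 0 ^ CARD('a) * mp_pderiv 0 (restrict_line F P Q)
             + mp_var 1 ^ CARD('a) * mp_pderiv 1 (restrict_line F P Q)"
proof -
  let ?s = "\<lambda>A. mp_subst A (\<lambda>i. linform (P i) (Q i))"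
  have "restrict_line F P Q * ?s H = ?s (\<Sum>i\<le>n. mp_var i ^ CARD('a) * mp_pderiv i F)"
    by (simp add: restrict_line_eq_mp_subst assms(2) mp_subst_mult)
  also have "\<dots> = (\<Sum>i\<le>n. linform (P i) (Q i) ^ CARD('a) * ?s (mp_pderiv i F))"
    by (simp add: mp_subst_sum mp_subst_mult mp_subst_power)
  also have "\<dots> = mp_var 0 ^ CARD('a) * mp_pderiv 0 (restrict_line F P Q)
                + mp_var 1 ^ CARD('a) * mp_pderiv 1 (restrict_line F P Q)"
    by (simp add: mp_pderiv_restrict_line[OF assms(1)] mp_pderiv_linform linform_power_card
        sum_distrib_left sum.distrib algebra_simps)
  finally show ?thesis .
qed

text \<open>Eliminating one partial derivative from the two identities above leaves the Moore form
  times the other one.\<close>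

lemma restrict_line_dvd_moore_form_mult_pderiv:
  fixes F :: "'a::{finite,field} mpoly" and P Q :: "nat \<Rightarrow> 'a"
  assumes form: "is_form n d F" and nonclassical: "frobenius_nonclassical n CARD('a) F"
  shows "restrict_line F P Q dvd moore_form CARD('a) * mp_pderiv j (restrict_line F P Q)"
proof -
  let ?q = "CARD('a)"
  define G where "G = restrict_line F P Q"
  obtain H where "(\<Sum>i\<le>n. mp_var i ^ ?q * mp_pderiv i F) = F * H"
    using nonclassical unfolding frobenius_nonclassical_def by (auto simp: dvd_def)
  from restrict_line_frobenius[OF form this, of P Q] obtain S
    where frobenius: "G * S = mp_var 0 ^ ?q * mp_pderiv 0 G + mp_var 1 ^ ?q * mp_pderiv 1 G"
    unfolding G_def by blast
  have euler: "mp_var 0 * mp_pderiv 0 G + mp_var 1 * mp_pderiv 1 G = of_nat d * G"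
    unfolding G_def by (rule restrict_line_euler[OF form])
  have "G * (mp_var 0 * S - of_nat d * mp_var 0 ^ ?q) = mp_var 0 * (G * S) - mp_var 0 ^ ?q * (of_nat d * G)"
    by (simp add: algebra_simps)
  also have "\<dots> = moore_form ?q * mp_pderiv 1 G"
    by (simp only: frobenius flip: euler) (simp add: moore_form_def algebra_simps)
  finally have dvd_1: "G dvd moore_form ?q * mp_pderiv 1 G" by (metis dvd_triv_left)
  have "G * (of_nat d * mp_var 1 ^ ?q - mp_var 1 * S) = mp_var 1 ^ ?q * (of_nat d * G) - mp_var 1 * (G * S)"
    by (simp add: algebra_simps)
  also have "\<dots> = moore_form ?q * mp_pderiv 0 G"
    by (simp only: frobenius flip: euler) (simp add: moore_form_def algebra_simps)
  finally have dvd_0: "G dvd moore_form ?q * mp_pderiv 0 G" by (metis dvd_triv_left)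
  have "mp_pderiv j G = 0" if "j \<noteq> 0" "j \<noteq> 1"
    using that by (simp add: G_def mp_pderiv_restrict_line[OF form] mp_pderiv_linform)
  then show ?thesis
    using dvd_0 dvd_1 unfolding G_def by (cases "j = 0"; cases "j = 1") auto
qed

theorem restrict_line_pth_power_if_no_rational_zero:
  fixes F :: "'a::{finite,field} mpoly" and P Q :: "nat \<Rightarrow> 'a"
  assumes form: "is_form n d F" and nonclassical: "frobenius_nonclassical n CARD('a) F"
    and nonzero: "restrict_line F P Q \<noteq> 0"
    and no_zero: "\<And>s t. s \<noteq> 0 \<or> t \<noteq> 0 \<Longrightarrow> mp_eval F (\<lambda>i. s * P i + t * Q i) \<noteq> 0"
  shows "\<exists>H. restrict_line F P Q = H ^ CHAR('a)"
proof -
  define G where "G = restrict_line F P Q"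
  have no_linear_factor: "\<not> linform a b dvd G" if "a \<noteq> 0 \<or> b \<noteq> 0" for a b :: 'a
  proof
    assume "linform a b dvd G"
    then obtain C where "G = linform a b * C" by (auto simp: dvd_def)
    then have "mp_eval F (\<lambda>i. (- b) * P i + a * Q i) = 0"
      using mp_eval_restrict_line[of F P Q "\<lambda>k. if k = 0 then - b else a"]
      by (simp add: G_def mp_eval_mult)
    then show False using no_zero[of "- b" a] that by auto
  qed
  obtain u where "u \<noteq> 0"
    and moore: "moore_form CARD('a) = mp_var 0 * (\<Prod>c\<in>(UNIV::'a set). linform (- c) 1) * mp_const u"
    using moore_form_factorization by blast
  have "G dvd mp_pderiv j G" for j
  proof -
    have "G dvd linform 1 0 * ((\<Prod>c\<in>(UNIV::'a set). linform (- c) 1) * (mp_const u * mp_pderiv j G))"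
      using restrict_line_dvd_moore_form_mult_pderiv[OF form nonclassical, of P Q j]
      by (simp add: G_def moore linform_def ac_simps)
    then have "G dvd (\<Prod>c\<in>(UNIV::'a set). linform (- c) 1) * (mp_const u * mp_pderiv j G)"
      by (rule prime_elem_dvd_cancel_left[rotated 2]) (simp_all add: prime_elem_linform no_linear_factor)
    then have "G dvd mp_const u * mp_pderiv j G"
      by (rule prod_prime_elems_dvd_cancel_left[rotated 2]) (simp_all add: prime_elem_linform no_linear_factor)
    then show ?thesis using \<open>u \<noteq> 0\<close> by (simp add: dvd_mp_const_mult_iff)
  qed
  then have "mp_pderiv j G = 0" for j
    using nonzero unfolding G_def by (blast intro: mp_pderiv_eq_0_if_dvd)
  then show ?thesis
    unfolding G_def by (intro pth_power_if_CHAR_dvd_exponents CHAR_dvd_exponents_if_mp_pderivs_eq_0)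
qed


section \<open>Multiplicities at points outside the ground field\<close>

lemma mp_map_to_ac_mult: "mp_map to_ac (A * B) = mp_map to_ac A * mp_map to_ac B"
  by (rule mp_map_mult) simp_all

lemma mp_map_to_ac_dvd: "A dvd B \<Longrightarrow> mp_map to_ac A dvd mp_map to_ac B"
  by (auto simp: dvd_def mp_map_to_ac_mult)

lemma mp_map_to_ac_eq_0_iff [simp]: "mp_map to_ac A = 0 \<longleftrightarrow> A = 0"
  by (metis lookup_mp_map lookup_zero poly_mapping_eqI to_ac_0 to_ac_eq_0_iff)

lemma mp_map_to_ac_pderiv: "mp_map to_ac (mp_pderiv i A) = mp_pderiv i (mp_map to_ac A)"
  by (rule mp_map_pderiv) simp_all

lemma mp_map_to_ac_moore_form: "mp_map to_ac (moore_form q) = moore_form q"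
  by (simp add: moore_form_eq_single mp_map_diff mp_map_single)

lemma binform_mult:
  fixes G :: "'b::field mpoly"
  assumes "G \<noteq> 0" "s \<noteq> 0 \<or> t \<noteq> 0"
  shows binform_mult_power_dvd: "linform t (- s) ^ binform_mult G s t dvd G"
    and binform_mult_Suc_power_not_dvd: "\<not> linform t (- s) ^ Suc (binform_mult G s t) dvd G"
proof -
  let ?L = "linform t (- s)"
  have mult: "binform_mult G s t = (GREATEST m. ?L ^ m dvd G)"
    by (simp add: binform_mult_def linform_def mp_const_uminus)
  have "t \<noteq> 0 \<or> - s \<noteq> 0" using assms(2) by auto
  then have L: "?L \<noteq> 0" "total_degree ?L = 1" by (simp_all add: linform_neq_0 total_degree_linform)
  have bound: "m \<le> total_degree G" if dvd: "?L ^ m dvd G" for m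
  proof -
    obtain C where C: "G = ?L ^ m * C" using dvd by (auto simp: dvd_def)
    then have "C \<noteq> 0" using assms(1) by auto
    with C have "total_degree G = m + total_degree C"
      using L by (simp add: total_degree_mult total_degree_power)
    then show ?thesis by simp
  qed
  show "?L ^ binform_mult G s t dvd G"
    unfolding mult by (rule GreatestI_nat[where k=0]) (auto intro: bound)
  show "\<not> ?L ^ Suc (binform_mult G s t) dvd G"
  proof
    assume "?L ^ Suc (binform_mult G s t) dvd G"
    then have "Suc (binform_mult G s t) \<le> binform_mult G s t"
      unfolding mult by (rule Greatest_le_nat[where b="total_degree G"]) (auto intro: bound)
    then show False by simp
  qed
qed

text \<open>Differentiating G = L^(m+1) K shows that L^(m+1) divides (m+1) c L^m R K.\<close>

lemma dvd_mult_cofactor_if_power_dvd_mult_pderiv: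
  fixes L K R :: "'b::field mpoly"
  assumes "L \<noteq> 0" "mp_pderiv j L = mp_const c" "c \<noteq> 0" "of_nat (Suc m) \<noteq> (0::'b)"
    and "L ^ Suc m * K dvd R * mp_pderiv j (L ^ Suc m * K)"
  shows "L dvd R * K"
proof -
  let ?c = "mp_const (of_nat (Suc m) * c)"
  have "mp_pderiv j (L ^ Suc m * K) = of_nat (Suc m) * L ^ m * mp_const c * K + L ^ Suc m * mp_pderiv j K"
    by (simp only: mp_pderiv_mult mp_pderiv_power assms(2))
  also have "\<dots> = L ^ m * (?c * K) + L ^ Suc m * mp_pderiv j K"
    by (simp add: mp_const_add mp_const_mult mp_const_of_nat algebra_simps)
  finally have "L ^ Suc m dvd R * (L ^ m * (?c * K)) + L ^ Suc m * (R * mp_pderiv j K)"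
    using dvd_mult_left[OF assms(5)] by (simp add: algebra_simps)
  then have "L ^ Suc m dvd R * (L ^ m * (?c * K))"
    by (metis dvd_add_left_iff dvd_triv_left)
  then have "L ^ m * L dvd L ^ m * (?c * (R * K))"
    by (simp only: power_Suc2 ac_simps)
  moreover have "L ^ m \<noteq> 0" using assms(1) by simp
  ultimately have "L dvd ?c * (R * K)"
    using dvd_mult_cancel_left by blast
  then show ?thesis
    using assms(3,4) by (simp add: dvd_mp_const_mult_iff)
qed

lemma CHAR_dvd_binform_mult:
  fixes G R :: "'b::field mpoly"
  assumes "G \<noteq> 0" "\<And>j. G dvd R * mp_pderiv j G"
    and "s \<noteq> 0 \<or> t \<noteq> 0" "\<not> linform t (- s) dvd R"
  shows "CHAR('b) dvd binform_mult G s t"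
proof (rule ccontr)
  let ?L = "linform t (- s)"
  assume "\<not> CHAR('b) dvd binform_mult G s t"
  then have "of_nat (binform_mult G s t) \<noteq> (0::'b)"
    by (simp add: of_nat_eq_0_iff_char_dvd)
  then obtain m where m: "binform_mult G s t = Suc m" "of_nat (Suc m) \<noteq> (0::'b)"
    by (cases "binform_mult G s t") auto
  obtain K where G: "G = ?L ^ Suc m * K"
    using binform_mult_power_dvd[OF assms(1,3)] m by (auto simp: dvd_def)
  have "t \<noteq> 0 \<or> - s \<noteq> 0" using assms(3) by auto
  then have L: "?L \<noteq> 0" "prime_elem ?L" by (simp_all add: linform_neq_0 prime_elem_linform)
  obtain j c where j: "mp_pderiv j ?L = mp_const c" "c \<noteq> 0"
  proof (cases "t = 0")
    case True
    then show ?thesis using assms(3) that[of 1 "- s"] by (simp add: mp_pderiv_linform)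
  qed (use that[of 0 t] in \<open>simp add: mp_pderiv_linform\<close>)
  have "?L ^ Suc m * K dvd R * mp_pderiv j (?L ^ Suc m * K)"
    using assms(2)[of j] unfolding G .
  then have "?L dvd R * K"
    by (rule dvd_mult_cofactor_if_power_dvd_mult_pderiv[OF L(1) j m(2)])
  then have "?L dvd K"
    using L(2) assms(4) by (simp add: prime_elem_dvd_mult_iff)
  then have "?L ^ Suc (Suc m) dvd G"
    unfolding G by (simp add: mult_dvd_mono)
  then show False
    using binform_mult_Suc_power_not_dvd[OF assms(1,3)] m(1) by simp
qed

lemma CHAR_dvd_int_mult:
  fixes F :: "'a::{finite,field} mpoly" and s t :: "'a alg_closure"
  assumes form: "is_form n d F" and nonclassical: "frobenius_nonclassical n CARD('a) F"
    and nonzero: "restrict_line F P Q \<noteq> 0" and point: "s \<noteq> 0 \<or> t \<noteq> 0"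
    and not_rational: "\<not> (\<exists>(c :: 'a alg_closure) (a :: nat \<Rightarrow> 'a). c \<noteq> 0 \<and>
                          (\<forall>i\<le>n. s * to_ac (P i) + t * to_ac (Q i) = c * to_ac (a i)))"
  shows "CHAR('a) dvd int_mult F P Q s t"
proof -
  have not_dvd: "\<not> linform t (- s) dvd moore_form CARD('a)"
  proof
    assume "linform t (- s) dvd moore_form CARD('a)"
    then obtain c a b where "c \<noteq> 0" "s = c * to_ac a" "t = c * to_ac b"
      using linform_dvd_moore_form_imp_rational[OF point] by blast
    then have "\<exists>(c :: 'a alg_closure) (a :: nat \<Rightarrow> 'a). c \<noteq> 0 \<and>
                 (\<forall>i\<le>n. s * to_ac (P i) + t * to_ac (Q i) = c * to_ac (a i))"
      by (intro exI[of _ c] exI[of _ "\<lambda>i. a * P i + b * Q i"]) (simp add: algebra_simps)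
    with not_rational show False by contradiction
  qed
  have dvd_pderiv: "mp_map to_ac (restrict_line F P Q)
      dvd moore_form CARD('a) * mp_pderiv j (mp_map to_ac (restrict_line F P Q))" for j
    using mp_map_to_ac_dvd[OF restrict_line_dvd_moore_form_mult_pderiv[OF form nonclassical]]
    by (simp add: mp_map_to_ac_mult mp_map_to_ac_moore_form mp_map_to_ac_pderiv)
  show ?thesis
    using CHAR_dvd_binform_mult[OF _ dvd_pderiv point not_dvd] nonzero by (simp add: int_mult_def)
qed

theorem lemma2p2:
  fixes F :: "'a::{finite,field} mpoly"
    and n d q p :: nat
    and P Q :: "nat \<Rightarrow> 'a"
  assumes q_def: "q = CARD('a)"
    and p_def: "p = CHAR('a)"
    and form: "is_form n d F" and F_nz: "F \<noteq> 0" and d_pos: "0 < d"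
    and nonclassical: "frobenius_nonclassical n q F"
    and line: "\<forall>a b. (\<forall>i\<le>n. a * P i + b * Q i = 0) \<longrightarrow> a = 0 \<and> b = 0"
    and not_contained: "restrict_line F P Q \<noteq> 0"
    and not_pth_power: "\<not> (\<exists>H. restrict_line F P Q = H ^ p)"
  shows "(\<exists>s t :: 'a. (s \<noteq> 0 \<or> t \<noteq> 0) \<and> mp_eval F (\<lambda>i. s * P i + t * Q i) = 0)
       \<and> (\<forall>s t :: 'a alg_closure.
            (s \<noteq> 0 \<or> t \<noteq> 0)
            \<and> mp_eval (mp_map to_ac F) (\<lambda>i. s * to_ac (P i) + t * to_ac (Q i)) = 0
            \<and> \<not> (\<exists>(c :: 'a alg_closure) (a :: nat \<Rightarrow> 'a). c \<noteq> 0 \<and>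
                   (\<forall>i\<le>n. s * to_ac (P i) + t * to_ac (Q i) = c * to_ac (a i)))
            \<longrightarrow> p dvd int_mult F P Q s t)"
proof (intro conjI allI impI)
  have nonclassical_card: "frobenius_nonclassical n CARD('a) F"
    using nonclassical q_def by simp
  show "\<exists>s t :: 'a. (s \<noteq> 0 \<or> t \<noteq> 0) \<and> mp_eval F (\<lambda>i. s * P i + t * Q i) = 0"
  proof (rule ccontr)
    assume "\<not> ?thesis"
    then have "\<exists>H. restrict_line F P Q = H ^ CHAR('a)"
      by (intro restrict_line_pth_power_if_no_rational_zero[OF form nonclassical_card not_contained]) blast
    with not_pth_power p_def show False by blast
  qed
  fix s t :: "'a alg_closure"
  assume "(s \<noteq> 0 \<or> t \<noteq> 0)
            \<and> mp_eval (mp_map to_ac F) (\<lambda>i. s * to_ac (P i) + t * to_ac (Q i)) = 0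
            \<and> \<not> (\<exists>(c :: 'a alg_closure) (a :: nat \<Rightarrow> 'a). c \<noteq> 0 \<and>
                   (\<forall>i\<le>n. s * to_ac (P i) + t * to_ac (Q i) = c * to_ac (a i)))"
  then show "p dvd int_mult F P Q s t"
    using CHAR_dvd_int_mult[OF form nonclassical_card not_contained] p_def by blast
qed

end
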